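(* The output $x_T$ of Algorithm 1 satisfies $\mathbb{E}[f_\mu(x_T)]\le -(1-5\epsilon)\,\mathrm{OPT}$, where the expectation is over the random choices $t_0,\dots,t_{T-1}$.
   Context: Standing setup: $A\in\mathbb{R}^{m\times n}_{\ge 0}$ has no zero column and is normalized so that $\min_{i\in[n]}\|A_{:i}\|_\infty=1$, where $A_{:i}$ denotes the $i$-th column. The packing LP is $\max\{\mathbf 1^Tx: x\ge 0,\ Ax\le \mathbf 1\}$ with optimal value $\mathrm{OPT}$. $\epsilon\in(0,1/2]$. $\log$ is the natural logarithm unless written $\log_2$. $\mu=\frac{\epsilon}{4\log(nm/\epsilon)}$, $p_j(x)=\exp\big(\frac{1}{\mu}((Ax)_j-1)\big)$ for $j\in[m]$, and $f_\mu(x)=-\mathbf 1^Tx+\mu\sum_{j=1}^m p_j(x)$ for $x\ge 0$; its gradient is $\nabla_i f_\mu(x)=-1+\sum_j A_{ji}p_j(x)\ge -1$. Algorithm 1: set $\alpha=\mu/20$, $w=\lceil\log_2(1/\epsilon)\rceil$, $T=\lceil 10w\log(2n)/(\alpha\epsilon)\rceil$, and $x_0[i]=\frac{1-\epsilon/2}{n\|A_{:i}\|_\infty}$ for $i\in[n]$. For $k=0,\dots,T-1$: choose $t_k\in\{0,\dots,w-1\}$ uniformly at random, independently of the past; writing $g_i=\nabla_i f_\mu(x_k)$, define $\xi_k[i]=0$ if $|g_i|\le\epsilon$, $\xi_k[i]=g_i$ if $\epsilon<|g_i|\le 1$, $\xi_k[i]=1$ if $g_i>1$; for $t\in\{0,\dots,w-1\}$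 define $\xi^{(t)}_k[i]=\xi_k[i]$ if $\epsilon2^t<|\xi_k[i]|\le\epsilon2^{t+1}$ and $\xi^{(t)}_k[i]=0$ otherwise; set $x^{(t)}_{k+1}[i]=x_k[i]\exp(-\alpha\,\xi^{(t)}_k[i])$ and $x_{k+1}=x^{(t_k)}_{k+1}$. Output $x_T$. *)

theory Defs
  imports "HOL-Analysis.Analysis" "HOL-Library.FuncSet"
begin

text \<open>Matrix A is given as a function A j i (row j < m, column i < n); vectors are
  functions nat \<Rightarrow> real, only coordinates i < n matter.\<close>

definition matvec :: "nat \<Rightarrow> (nat \<Rightarrow> nat \<Rightarrow> real) \<Rightarrow> (nat \<Rightarrow> real) \<Rightarrow> nat \<Rightarrow> real" where
  "matvec n A x j = (\<Sum>i<n. A j i * x i)"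

definition colnorm :: "nat \<Rightarrow> (nat \<Rightarrow> nat \<Rightarrow> real) \<Rightarrow> nat \<Rightarrow> real" where
  "colnorm m A i = Max ((\<lambda>j. \<bar>A j i\<bar>) ` {..<m})"

definition packing_feasible :: "nat \<Rightarrow> nat \<Rightarrow> (nat \<Rightarrow> nat \<Rightarrow> real) \<Rightarrow> (nat \<Rightarrow> real) \<Rightarrow> bool" where
  "packing_feasible m n A x \<longleftrightarrow> (\<forall>i<n. 0 \<le> x i) \<and> (\<forall>j<m. matvec n A x j \<le> 1)"

definition OPT :: "nat \<Rightarrow> nat \<Rightarrow> (nat \<Rightarrow> nat \<Rightarrow> real) \<Rightarrow> real" where
  "OPT m n A = Sup {(\<Sum>i<n. x i) | x. packing_feasible m n A x}"

definition mu_param :: "nat \<Rightarrow> nat \<Rightarrow> real \<Rightarrow> real" where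
  "mu_param m n \<epsilon> = \<epsilon> / (4 * ln (real n * real m / \<epsilon>))"

definition pj :: "nat \<Rightarrow> (nat \<Rightarrow> nat \<Rightarrow> real) \<Rightarrow> real \<Rightarrow> (nat \<Rightarrow> real) \<Rightarrow> nat \<Rightarrow> real" where
  "pj n A \<mu> x j = exp ((matvec n A x j - 1) / \<mu>)"

definition f_mu :: "nat \<Rightarrow> nat \<Rightarrow> (nat \<Rightarrow> nat \<Rightarrow> real) \<Rightarrow> real \<Rightarrow> (nat \<Rightarrow> real) \<Rightarrow> real" where
  "f_mu m n A \<mu> x = - (\<Sum>i<n. x i) + \<mu> * (\<Sum>j<m. pj n A \<mu> x j)"

definition grad_f :: "nat \<Rightarrow> nat \<Rightarrow> (nat \<Rightarrow> nat \<Rightarrow> real) \<Rightarrow> real \<Rightarrow> (nat \<Rightarrow> real) \<Rightarrow> nat \<Rightarrow> real" where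
  "grad_f m n A \<mu> x i = -1 + (\<Sum>j<m. A j i * pj n A \<mu> x j)"

text \<open>Truncated gradient xi_k (note the gradient is always \<ge> -1).\<close>
definition xi_trunc :: "real \<Rightarrow> real \<Rightarrow> real" where
  "xi_trunc \<epsilon> g = (if \<bar>g\<bar> \<le> \<epsilon> then 0 else if g > 1 then 1 else g)"

definition xi_bucket :: "real \<Rightarrow> nat \<Rightarrow> real \<Rightarrow> real" where
  "xi_bucket \<epsilon> t v = (if \<epsilon> * 2 ^ t < \<bar>v\<bar> \<and> \<bar>v\<bar> \<le> \<epsilon> * 2 ^ (t + 1) then v else 0)"

definition alg_w :: "real \<Rightarrow> nat" where
  "alg_w \<epsilon> = nat \<lceil>log 2 (1 / \<epsilon>)\<rceil>"

definition alg_alpha :: "nat \<Rightarrow> nat \<Rightarrow> real \<Rightarrow> real" where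
  "alg_alpha m n \<epsilon> = mu_param m n \<epsilon> / 20"

definition alg_T :: "nat \<Rightarrow> nat \<Rightarrow> real \<Rightarrow> nat" where
  "alg_T m n \<epsilon> = nat \<lceil>10 * real (alg_w \<epsilon>) * ln (2 * real n) / (alg_alpha m n \<epsilon> * \<epsilon>)\<rceil>"

definition alg_x0 :: "nat \<Rightarrow> nat \<Rightarrow> (nat \<Rightarrow> nat \<Rightarrow> real) \<Rightarrow> real \<Rightarrow> nat \<Rightarrow> real" where
  "alg_x0 m n A \<epsilon> i = (1 - \<epsilon> / 2) / (real n * colnorm m A i)"

definition alg_step :: "nat \<Rightarrow> nat \<Rightarrow> (nat \<Rightarrow> nat \<Rightarrow> real) \<Rightarrow> real \<Rightarrow> nat \<Rightarrow> (nat \<Rightarrow> real) \<Rightarrow> nat \<Rightarrow> real" where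
  "alg_step m n A \<epsilon> t x i =
     x i * exp (- alg_alpha m n \<epsilon> *
        xi_bucket \<epsilon> t (xi_trunc \<epsilon> (grad_f m n A (mu_param m n \<epsilon>) x i)))"

fun alg_iter :: "nat \<Rightarrow> nat \<Rightarrow> (nat \<Rightarrow> nat \<Rightarrow> real) \<Rightarrow> real \<Rightarrow> (nat \<Rightarrow> nat) \<Rightarrow> nat \<Rightarrow> nat \<Rightarrow> real" where
  "alg_iter m n A \<epsilon> ts 0 = alg_x0 m n A \<epsilon>"
| "alg_iter m n A \<epsilon> ts (Suc k) = alg_step m n A \<epsilon> (ts k) (alg_iter m n A \<epsilon> ts k)"

text \<open>Expectation over independent uniform t_0..t_{T-1} in {0..w-1}: uniform average over all
  choice sequences.\<close>
definition expected_f_output :: "nat \<Rightarrow> nat \<Rightarrow> (nat \<Rightarrow> nat \<Rightarrow> real) \<Rightarrow> real \<Rightarrow> real" where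
  "expected_f_output m n A \<epsilon> =
     (let T = alg_T m n \<epsilon>; w = alg_w \<epsilon> in
       (\<Sum>ts \<in> {..<T} \<rightarrow>\<^sub>E {..<w}. f_mu m n A (mu_param m n \<epsilon>) (alg_iter m n A \<epsilon> ts T))
       / real w ^ T)"

end

theory Submission
  imports Defs
begin

text \<open>Algorithm 1 is multiplicative-weights (entropic mirror) descent on the smoothed objective
  \<open>f\<^sub>\<mu>\<close>, where each iteration only moves the coordinates whose truncated gradient lies in one
  randomly chosen dyadic bucket. Averaging over the bucket, one step decreases the potential
  \<open>\<Phi>\<^sub>u(x) + 2(1+\<alpha>) f\<^sub>\<mu>(x)\<close> with \<open>\<Phi>\<^sub>u(x) = \<Sum>\<^sub>i x\<^sub>i - u\<^sub>i ln x\<^sub>i\<close> by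
  \<open>\<alpha>/w (f\<^sub>\<mu>(x) - f\<^sub>\<mu>(u))\<close>, up to an error \<open>\<alpha>\<epsilon>/w (\<Sum>x + \<Sum>u)\<close>, for every
  comparison point \<open>u = (1 - \<epsilon>/2) z\<close> with \<open>z\<close> feasible. Inside the bucket all moved
  coordinates have truncated gradient of comparable size, which is what makes every single step a
  descent step for \<open>f\<^sub>\<mu>\<close>; hence \<open>\<bbbE> f\<^sub>\<mu>(x\<^sub>k)\<close> is non-increasing in \<open>k\<close>.
  Telescoping over \<open>T\<close> steps then bounds \<open>\<bbbE> f\<^sub>\<mu>(x\<^sub>T)\<close> by
  \<open>f\<^sub>\<mu>(u) + O(\<epsilon> OPT) + w (\<Phi>\<^sub>u(x\<^sub>0) - min \<Phi>\<^sub>u) / (\<alpha> T)\<close>, and \<open>T\<close> is chosen so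
  that the last term is \<open>O(\<epsilon>)\<close>; since \<open>f\<^sub>\<mu>(u) \<le> -(1 - \<epsilon>/2)\<Sum>z + \<mu>\<epsilon>\<close>, the claim
  follows by taking the supremum over \<open>z\<close>.\<close>

lemma exp_minus_le_quadratic:
  fixes y :: real assumes "0 \<le> y" shows "exp (- y) \<le> 1 - y + y\<^sup>2 / 2"
proof -
  have e: "1 + y + y\<^sup>2/2 \<le> exp y" using assms exp_lower_Taylor_quadratic by auto
  have eq: "(1 - y + y\<^sup>2/2) * (1 + y + y\<^sup>2/2) = 1 + y^4/4"
    by (simp add: algebra_simps power2_eq_square power4_eq_xxxx)
  have pos: "0 \<le> 1 - y + y\<^sup>2/2"
  proof -
    have "0 \<le> (y - 1)\<^sup>2" by simp
    thus ?thesis by (simp add: power2_eq_square algebra_simps)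
  qed
  have "1 \<le> (1 - y + y\<^sup>2/2) * (1 + y + y\<^sup>2/2)" unfolding eq by simp
  also have "\<dots> \<le> (1 - y + y\<^sup>2/2) * exp y"
    using e pos by (rule mult_left_mono)
  finally have "exp (- y) \<le> (1 - y + y\<^sup>2/2) * exp y * exp (- y)"
    by (simp add: mult_right_mono)
  thus ?thesis by (simp add: mult.assoc exp_minus_inverse)
qed

lemma exp_le_quadratic:
  fixes d :: real assumes "\<bar>d\<bar> \<le> 1" shows "exp d \<le> 1 + d + d\<^sup>2"
proof (cases "0 \<le> d")
  case True thus ?thesis using assms exp_bound[of d] by auto
next
  case False
  have "exp (- (- d)) \<le> 1 - (- d) + (- d)\<^sup>2/2" by (rule exp_minus_le_quadratic) (use False in auto)
  hence "exp d \<le> 1 + d + d\<^sup>2/2" by simp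
  moreover have "0 \<le> d\<^sup>2" by simp
  ultimately show ?thesis by linarith
qed

lemma abs_exp_minus_one_le: fixes y :: real shows "\<bar>exp y - 1\<bar> \<le> \<bar>y\<bar> * exp \<bar>y\<bar>"
proof (cases "0 \<le> y")
  case True
  have "1 - y \<le> exp (- y)" using exp_ge_add_one_self[of "- y"] by simp
  hence "(1 - y) * exp y \<le> 1" by (simp add: exp_minus field_simps)
  thus ?thesis using True by (simp add: algebra_simps)
next
  case False
  have "1 \<le> exp (- y)" using False by simp
  hence "- y \<le> - y * exp (- y)" using False by (simp add: mult_le_cancel_left1)
  moreover have "1 + y \<le> exp y" "exp y \<le> 1" using False by auto
  ultimately have "\<bar>exp y - 1\<bar> \<le> - y * exp (- y)" by linarith
  thus ?thesis using False by simp
qed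

lemma sum_PiE_lessThan_Suc:
  fixes h :: "(nat \<Rightarrow> 'a) \<Rightarrow> 'b::comm_monoid_add"
  shows "(\<Sum>ts \<in> {..<Suc k} \<rightarrow>\<^sub>E B. h ts) = (\<Sum>ts \<in> {..<k} \<rightarrow>\<^sub>E B. \<Sum>y\<in>B. h (ts(k := y)))"
proof -
  let ?upd = "\<lambda>(y, ts). ts(k := y)"
  have "{..<Suc k} \<rightarrow>\<^sub>E B = ?upd ` (B \<times> ({..<k} \<rightarrow>\<^sub>E B))"
    using PiE_insert_eq[of k "{..<k}" "\<lambda>_. B"] by (simp add: lessThan_Suc)
  moreover have "inj_on ?upd (B \<times> ({..<k} \<rightarrow>\<^sub>E B))"
    using inj_combinator[of k "{..<k}" "\<lambda>_. B"] by simp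
  ultimately have "(\<Sum>ts \<in> {..<Suc k} \<rightarrow>\<^sub>E B. h ts) = (\<Sum>z \<in> B \<times> ({..<k} \<rightarrow>\<^sub>E B). h (?upd z))"
    by (simp add: sum.reindex)
  also have "\<dots> = (\<Sum>(y, ts) \<in> B \<times> ({..<k} \<rightarrow>\<^sub>E B). h (ts(k := y)))"
    by (simp add: split_beta)
  also have "\<dots> = (\<Sum>y\<in>B. \<Sum>ts \<in> {..<k} \<rightarrow>\<^sub>E B. h (ts(k := y)))"
    by (rule sum.cartesian_product[symmetric])
  also have "\<dots> = (\<Sum>ts \<in> {..<k} \<rightarrow>\<^sub>E B. \<Sum>y\<in>B. h (ts(k := y)))"
    by (rule sum.swap)
  finally show ?thesis .
qed

lemma sum_mult_matvec_swap:
  fixes p z :: "nat \<Rightarrow> real" and A :: "nat \<Rightarrow> nat \<Rightarrow> real"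
  shows "(\<Sum>j<m. p j * matvec n A z j) = (\<Sum>i<n. z i * (\<Sum>j<m. A j i * p j))"
proof -
  have "(\<Sum>j<m. p j * matvec n A z j) = (\<Sum>j<m. \<Sum>i<n. z i * (A j i * p j))"
    unfolding matvec_def by (simp add: sum_distrib_left mult_ac)
  also have "\<dots> = (\<Sum>i<n. z i * (\<Sum>j<m. A j i * p j))"
    by (subst sum.swap) (simp add: sum_distrib_left)
  finally show ?thesis .
qed

text \<open>The error terms of the telescoped potential bound, with \<open>K = T\<alpha>/w\<close>, \<open>C = 2(1 + \<alpha>)\<close>,
  \<open>L = ln n\<close> and \<open>t = \<mu>\<epsilon>\<close>, are absorbed into an \<open>O(\<epsilon>)\<close> loss.\<close>
lemma absorb_error_terms:
  fixes K C E S L opt e t :: real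
  assumes e: "0 < e" "e \<le> 1/2" and Ke: "10 * ((6/10) + L) \<le> K * e" and L: "0 \<le> L"
    and C: "0 < C" "C \<le> (21/10)" and opt: "1 \<le> opt" and S: "0 \<le> S" and t: "0 \<le> t" "t \<le> (21/100) * e"
    and H: "(K + C) * E \<le> 1 + (1 - e/2) * S * L + C * t
                              + K * (- ((1 - e/2) * S) + t + e * (2 * opt + (1 - e/2) * S))"
  shows "E \<le> - (1 - (19/10) * e) * S + 3 * e * opt"
proof -
  define U where "U = (1 - e/2) * S"
  define R where "R = - (1 - (19/10) * e) * S + 3 * e * opt"
  define Q where "Q = 1 + U * L + C * t + K * (- U + t + e * (2 * opt + U))"
  have "10 * ((6/10) + L) = 6 + 10 * L" by simp
  hence Kge: "6 \<le> K * e" using Ke L by linarith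
  hence "0 < K * e" by linarith
  hence K: "0 \<le> K" using e by (simp add: zero_less_mult_iff)
  have id: "(K + C) * R - Q = (4/10) * (K * e * S) + (1/2) * (K * e * e * S) - C * S + (19/10) * (C * e * S)
     + K * e * opt + 3 * (C * e * opt) - 1 - U * L - C * t - K * t"
    unfolding R_def Q_def U_def by (simp add: algebra_simps)
  have "0 \<le> K * e * e * S" "0 \<le> C * e * S" "0 \<le> C * e * opt" "0 \<le> S * L"
    using K e S C opt L by auto
  moreover have "6 * S + 10 * (S * L) \<le> K * e * S"
    using mult_right_mono[OF Ke S] by (simp add: algebra_simps)
  moreover have "C * S \<le> (21/10) * S" using C S by (intro mult_right_mono) auto
  moreover have "U * L \<le> S * L"
  proof -
    have "(1 - e/2) * S \<le> 1 * S" using e S by (intro mult_right_mono) auto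
    thus ?thesis unfolding U_def using L by (intro mult_right_mono) auto
  qed
  moreover have "K * t \<le> (21/100) * (K * e)" using mult_left_mono[OF t(2) K] by simp
  moreover have "K * e \<le> K * e * opt" using mult_left_mono[OF opt, of "K * e"] K e by simp
  moreover have "C * t \<le> (21/10) * ((21/100) * (1/2))" using C t e by (intro mult_mono) auto
  ultimately have "0 \<le> (K + C) * R - Q" unfolding id using Kge S by linarith
  hence "(K + C) * E \<le> (K + C) * R" using H unfolding Q_def U_def by linarith
  thus ?thesis unfolding R_def using K C by (simp add: mult_le_cancel_left_pos)
qed

section \<open>Dyadic buckets and truncated gradients\<close>

lemma sum_dyadic_indicator:
  fixes r :: real
  assumes "1 < r" "r \<le> 2 ^ N"
  shows "(\<Sum>t<N. if 2 ^ t < r \<and> r \<le> 2 ^ Suc t then 1 else 0) = (1::real)"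
  using assms(2)
proof (induction N)
  case 0 thus ?case using assms(1) by simp
next
  case (Suc N)
  show ?case
  proof (cases "r \<le> 2 ^ N")
    case True
    thus ?thesis using Suc.IH[OF True] by simp
  next
    case False
    have "\<not> r \<le> 2 ^ Suc t" if "t < N" for t
    proof -
      have "(2::real) ^ Suc t \<le> 2 ^ N" using that by (intro power_increasing) auto
      thus ?thesis using False by simp
    qed
    hence "(\<Sum>t<N. if 2 ^ t < r \<and> r \<le> 2 ^ Suc t then 1 else 0) = (0::real)"
      by (intro sum.neutral) auto
    thus ?thesis using False Suc.prems by simp
  qed
qed

lemma xi_bucket_cases:
  "xi_bucket \<epsilon> t v = 0 \<or> (xi_bucket \<epsilon> t v = v \<and> \<epsilon> * 2 ^ t < \<bar>v\<bar> \<and> \<bar>v\<bar> \<le> \<epsilon> * 2 ^ (t + 1))"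
  unfolding xi_bucket_def by auto

text \<open>The buckets \<open>t < N\<close> partition the range \<open>\<epsilon> < \<bar>v\<bar> \<le> 1\<close> once \<open>\<epsilon> 2\<^sup>N \<ge> 1\<close>.\<close>
lemma sum_xi_bucket:
  fixes F :: "real \<Rightarrow> real" and \<epsilon> v :: real
  assumes F0: "F 0 = 0" and e: "0 < \<epsilon>" and eN: "1 \<le> \<epsilon> * 2 ^ N"
    and v: "v = 0 \<or> (\<epsilon> < \<bar>v\<bar> \<and> \<bar>v\<bar> \<le> 1)"
  shows "(\<Sum>t<N. F (xi_bucket \<epsilon> t v)) = F v"
proof (cases "v = 0")
  case True
  thus ?thesis using F0 by (simp add: xi_bucket_def)
next
  case False
  define r where "r = \<bar>v\<bar> / \<epsilon>"
  have r1: "1 < r" and r2: "r \<le> 2 ^ N" using v False e eN unfolding r_def by (auto simp: field_simps)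
  have bucket: "xi_bucket \<epsilon> t v = (if 2 ^ t < r \<and> r \<le> 2 ^ Suc t then v else 0)" for t
    unfolding xi_bucket_def r_def using e by (simp add: field_simps)
  have "(\<Sum>t<N. F (xi_bucket \<epsilon> t v)) = (\<Sum>t<N. F v * (if 2 ^ t < r \<and> r \<le> 2 ^ Suc t then 1 else 0))"
    unfolding bucket using F0 by (intro sum.cong) auto
  also have "\<dots> = F v" using sum_dyadic_indicator[OF r1 r2] by (simp add: sum_distrib_left[symmetric])
  finally show ?thesis .
qed

lemma xi_trunc_props:
  fixes \<epsilon> g :: real
  assumes e: "0 < \<epsilon>" "\<epsilon> \<le> 1/2" and g: "-1 \<le> g"
  defines "\<xi> \<equiv> xi_trunc \<epsilon> g"
  shows "\<bar>\<xi>\<bar> \<le> 1" "\<xi> = 0 \<or> (\<epsilon> < \<bar>\<xi>\<bar> \<and> \<bar>\<xi>\<bar> \<le> 1)"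
    "0 \<le> \<xi> * g" "\<xi>\<^sup>2 \<le> \<xi> * g" "\<xi>\<^sup>2 * (1 + g) \<le> 2 * (\<xi> * g)"
    "0 < \<xi> \<Longrightarrow> 0 < g" "\<xi> < 0 \<Longrightarrow> g < 0"
proof -
  consider (small) "\<bar>g\<bar> \<le> \<epsilon>" | (big) "\<not> \<bar>g\<bar> \<le> \<epsilon>" "1 < g" | (mid) "\<not> \<bar>g\<bar> \<le> \<epsilon>" "g \<le> 1"
    by linarith
  note cs = this
  show "\<bar>\<xi>\<bar> \<le> 1" "\<xi> = 0 \<or> (\<epsilon> < \<bar>\<xi>\<bar> \<and> \<bar>\<xi>\<bar> \<le> 1)" "0 \<le> \<xi> * g"
    "0 < \<xi> \<Longrightarrow> 0 < g" "\<xi> < 0 \<Longrightarrow> g < 0"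
    using cs e g unfolding \<xi>_def xi_trunc_def by (cases; auto)+
  show "\<xi>\<^sup>2 \<le> \<xi> * g" using cs e g unfolding \<xi>_def xi_trunc_def by cases (auto simp: power2_eq_square)
  show "\<xi>\<^sup>2 * (1 + g) \<le> 2 * (\<xi> * g)" using cs
  proof cases
    case mid
    have "g\<^sup>2 * (1 + g) \<le> g\<^sup>2 * 2" using mid by (intro mult_left_mono) auto
    thus ?thesis using mid unfolding \<xi>_def xi_trunc_def by (simp add: power2_eq_square)
  qed (simp_all add: \<xi>_def xi_trunc_def)
qed

text \<open>Replacing the gradient by its truncation costs at most \<open>\<epsilon>\<close> per unit of \<open>x + u\<close>, plus a
  term absorbed by the descent of \<open>f\<^sub>\<mu>\<close>.\<close>
lemma xi_trunc_comparison:
  fixes \<epsilon> g x u :: real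
  assumes e: "0 < \<epsilon>" and g: "-1 \<le> g" and xu: "0 \<le> x" "0 \<le> u"
  shows "(u - x) * xi_trunc \<epsilon> g \<le> (u - x) * g + \<epsilon> * (x + u) + x * (xi_trunc \<epsilon> g * g)"
proof -
  consider (small) "\<bar>g\<bar> \<le> \<epsilon>" | (big) "\<not> \<bar>g\<bar> \<le> \<epsilon>" "1 < g" | (mid) "\<not> \<bar>g\<bar> \<le> \<epsilon>" "g \<le> 1"
    by linarith
  thus ?thesis
  proof cases
    case small
    have "u * (- \<epsilon>) \<le> u * g" using small xu by (intro mult_left_mono) auto
    moreover have "x * g \<le> x * \<epsilon>" using small xu by (intro mult_left_mono) auto
    ultimately show ?thesis using small unfolding xi_trunc_def by (simp add: algebra_simps)
  next
    case big
    have "u * 1 \<le> u * g" using big xu by (intro mult_left_mono) auto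
    moreover have "0 \<le> \<epsilon> * (x + u)" using e xu by simp
    ultimately show ?thesis using big xu unfolding xi_trunc_def by (simp add: algebra_simps)
  next
    case mid
    have "0 \<le> x * (g * g)" "0 \<le> \<epsilon> * (x + u)" using e xu by auto
    thus ?thesis using mid unfolding xi_trunc_def by (simp add: algebra_simps)
  qed
qed

section \<open>The algorithm\<close>

locale packing_algorithm =
  fixes m n :: nat and A :: "nat \<Rightarrow> nat \<Rightarrow> real" and \<epsilon> :: real
  assumes n_pos: "0 < n"
    and A_nonneg: "\<And>j i. j < m \<Longrightarrow> i < n \<Longrightarrow> 0 \<le> A j i"
    and column_nonzero: "\<And>i. i < n \<Longrightarrow> \<exists>j<m. A j i \<noteq> 0"
    and min_colnorm: "Min (colnorm m A ` {..<n}) = 1"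
    and eps_pos: "0 < \<epsilon>" and eps_le_half: "\<epsilon> \<le> 1 / 2"
begin

abbreviation "\<mu> \<equiv> mu_param m n \<epsilon>"
abbreviation "\<alpha> \<equiv> alg_alpha m n \<epsilon>"
abbreviation "w \<equiv> alg_w \<epsilon>"
abbreviation "T \<equiv> alg_T m n \<epsilon>"
abbreviation "\<Lambda> \<equiv> ln (real n * real m / \<epsilon>)"
abbreviation "col i \<equiv> colnorm m A i"
abbreviation "Ax x j \<equiv> matvec n A x j"
abbreviation "pen x j \<equiv> pj n A \<mu> x j"
abbreviation "f\<^sub>\<mu> x \<equiv> f_mu m n A \<mu> x"
abbreviation "grad x i \<equiv> grad_f m n A \<mu> x i"
abbreviation "\<xi> x i \<equiv> xi_trunc \<epsilon> (grad x i)"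
abbreviation "bucket t x i \<equiv> xi_bucket \<epsilon> t (\<xi> x i)"
abbreviation "step t x \<equiv> alg_step m n A \<epsilon> t x"
abbreviation "x\<^sub>0 \<equiv> alg_x0 m n A \<epsilon>"
abbreviation "opt \<equiv> OPT m n A"

lemma m_pos: "0 < m"
  using column_nonzero[OF n_pos] by auto

lemma colnorm_ge_1: "i < n \<Longrightarrow> 1 \<le> col i"
  using Min_le[of "colnorm m A ` {..<n}" "col i"] min_colnorm by auto

lemma A_le_colnorm: "j < m \<Longrightarrow> i < n \<Longrightarrow> A j i \<le> col i"
  unfolding colnorm_def by (rule order_trans[OF abs_ge_self]) (rule Max_ge, auto)

lemma colnorm_attained: assumes "i < n" obtains j where "j < m" "A j i = col i"
proof -
  have "Max ((\<lambda>j. \<bar>A j i\<bar>) ` {..<m}) \<in> (\<lambda>j. \<bar>A j i\<bar>) ` {..<m}"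
    by (rule Max_in) (use m_pos in auto)
  then obtain j where "j < m" "\<bar>A j i\<bar> = col i" unfolding colnorm_def by auto
  thus ?thesis using A_nonneg[of j i] assms that by auto
qed

lemma ex_colnorm_eq_1: obtains i where "i < n" "col i = 1"
proof -
  have "Min (colnorm m A ` {..<n}) \<in> colnorm m A ` {..<n}"
    by (rule Min_in) (use n_pos in auto)
  thus ?thesis using min_colnorm that by auto
qed

lemma nm_div_eps_ge: "2 * real n \<le> real n * real m / \<epsilon>"
proof -
  have "real n * 1 * 2 \<le> real n * real m * (1 / \<epsilon>)"
    using m_pos eps_pos eps_le_half by (intro mult_mono) (auto simp: field_simps)
  thus ?thesis by simp
qed

lemma nm_div_eps_pos: "0 < real n * real m / \<epsilon>"
  using nm_div_eps_ge n_pos by linarith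

lemma \<Lambda>_ge: "0.6 \<le> \<Lambda>"
proof -
  have "2 \<le> real n * real m / \<epsilon>" using nm_div_eps_ge n_pos by linarith
  hence "ln 2 \<le> \<Lambda>" by (subst ln_le_cancel_iff) auto
  thus ?thesis using ln2_ge_two_thirds by simp
qed

lemma mu_eq: "\<mu> = \<epsilon> / (4 * \<Lambda>)" unfolding mu_param_def ..

lemma mu_pos: "0 < \<mu>" using \<Lambda>_ge eps_pos mu_eq by simp

lemma mu_le: "\<mu> \<le> 0.21"
proof -
  have "\<mu> \<le> \<epsilon> / 2.4" unfolding mu_eq using \<Lambda>_ge eps_pos by (intro divide_left_mono) auto
  thus ?thesis using eps_le_half by simp
qed

lemma mu_eps_le: "\<mu> * \<epsilon> \<le> 1/8"
proof -
  have "\<mu> * \<epsilon> \<le> 0.21 * 0.5" using mu_le eps_le_half mu_pos eps_pos by (intro mult_mono) auto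
  thus ?thesis by simp
qed

lemma alpha_eq: "\<alpha> = \<mu> / 20" unfolding alg_alpha_def ..
lemma alpha_pos: "0 < \<alpha>" using alpha_eq mu_pos by simp
lemma alpha_le: "\<alpha> \<le> 0.011" using alpha_eq mu_le by simp

lemma exp_alpha_le: "exp \<alpha> \<le> 1.1"
proof -
  have "exp \<alpha> \<le> 1 + \<alpha> + \<alpha>\<^sup>2" by (rule exp_bound) (use alpha_pos alpha_le in auto)
  moreover have "\<alpha>\<^sup>2 \<le> 0.011 * 0.011" unfolding power2_eq_square
    using alpha_pos alpha_le by (intro mult_mono) auto
  ultimately show ?thesis using alpha_le by simp
qed

lemma w_ge_1: "1 \<le> w" and eps_2_pow_w: "1 \<le> \<epsilon> * 2 ^ w"
proof -
  have "2 \<le> 1 / \<epsilon>" using eps_pos eps_le_half by (simp add: field_simps)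
  hence l: "1 \<le> log 2 (1 / \<epsilon>)" using eps_pos by (subst le_log_iff) auto
  have wr: "log 2 (1 / \<epsilon>) \<le> real w" unfolding alg_w_def using l by linarith
  thus "1 \<le> w" using l by linarith
  have "2 powr (log 2 (1 / \<epsilon>)) \<le> 2 powr (real w)" by (rule powr_mono) (use wr in auto)
  hence "1 / \<epsilon> \<le> 2 ^ w" using eps_pos by (simp add: powr_realpow)
  thus "1 \<le> \<epsilon> * 2 ^ w" using eps_pos by (simp add: field_simps)
qed

lemma w_pos: "0 < real w" using w_ge_1 by simp

lemma T_alpha_div_w_ge: "10 * ln (2 * real n) / \<epsilon> \<le> real T * \<alpha> / real w"
proof -
  have "0 \<le> 10 * real w * ln (2 * real n) / (\<alpha> * \<epsilon>)"
    using w_pos n_pos alpha_pos eps_pos by simp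
  hence "10 * real w * ln (2 * real n) / (\<alpha> * \<epsilon>) \<le> real T"
    unfolding alg_T_def by linarith
  hence "(10 * real w * ln (2 * real n) / (\<alpha> * \<epsilon>)) * \<alpha> / real w \<le> real T * \<alpha> / real w"
    using alpha_pos w_pos by (intro divide_right_mono mult_right_mono) auto
  also have "(10 * real w * ln (2 * real n) / (\<alpha> * \<epsilon>)) * \<alpha> / real w = 10 * ln (2 * real n) / \<epsilon>"
    using alpha_pos w_pos eps_pos by (simp add: field_simps)
  finally show ?thesis .
qed

text \<open>Caps the penalty at points with \<open>f\<^sub>\<mu> = O(n)\<close>; this is where the factor \<open>ln (nm/\<epsilon>)\<close> in
  \<open>\<mu>\<close> is needed.\<close>
lemma exp_inv_mu_ge: "(2 * real n + 1) / \<mu> \<le> exp (1 / \<mu>)"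
proof -
  define y where "y = 1 / \<mu>"
  have y0: "0 \<le> y" using mu_pos y_def by simp
  have e1: "y \<le> exp (y/2)"
  proof -
    have "1 + y/2 + (y/2)\<^sup>2/2 \<le> exp (y/2)" by (rule exp_lower_Taylor_quadratic) (use y0 in auto)
    moreover have "0 \<le> (y - 2)\<^sup>2" by simp
    ultimately show ?thesis by (simp add: power2_eq_square algebra_simps)
  qed
  have "2 * \<Lambda> * 1 \<le> 2 * \<Lambda> * (1 / \<epsilon>)"
    using \<Lambda>_ge eps_pos eps_le_half by (intro mult_left_mono) (auto simp: field_simps)
  hence "exp (2 * \<Lambda>) \<le> exp (y/2)" unfolding y_def mu_eq by simp
  moreover have "exp (2 * \<Lambda>) = (real n * real m / \<epsilon>) * (real n * real m / \<epsilon>)"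
    by (simp only: mult_2 exp_add exp_ln[OF nm_div_eps_pos])
  moreover have "(2 * real n) * (2 * real n) \<le> (real n * real m / \<epsilon>) * (real n * real m / \<epsilon>)"
    using nm_div_eps_ge n_pos by (intro mult_mono) auto
  moreover have "2 * real n + 1 \<le> (2 * real n) * (2 * real n)"
  proof -
    have "real n * 1 \<le> real n * real n" using n_pos by (intro mult_left_mono) auto
    moreover have "(2 * real n) * (2 * real n) = 4 * (real n * real n)" by simp
    ultimately show ?thesis using n_pos by linarith
  qed
  ultimately have e2: "2 * real n + 1 \<le> exp (y/2)" by linarith
  have "(2 * real n + 1) * y \<le> exp (y/2) * exp (y/2)" using e1 e2 y0 by (intro mult_mono) auto
  also have "\<dots> = exp y" by (simp only: exp_add[symmetric] field_sum_of_halves)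
  finally show ?thesis unfolding y_def by simp
qed

lemma pen_pos: "0 < pen x j" unfolding pj_def by simp

lemma grad_ge: assumes "i < n" shows "-1 \<le> grad x i"
proof -
  have "0 \<le> (\<Sum>j<m. A j i * pen x j)"
    using A_nonneg assms pen_pos by (intro sum_nonneg mult_nonneg_nonneg) (auto intro: less_imp_le)
  thus ?thesis unfolding grad_f_def by simp
qed

lemma sum_A_pen: "(\<Sum>j<m. A j i * pen x j) = 1 + grad x i"
  unfolding grad_f_def by simp

lemma matvec_ge_term:
  "(\<And>i. i < n \<Longrightarrow> 0 \<le> x i) \<Longrightarrow> j < m \<Longrightarrow> i < n \<Longrightarrow> A j i * x i \<le> Ax x j"
  unfolding matvec_def using A_nonneg by (intro member_le_sum) auto

text \<open>A constraint slack of \<open>\<epsilon>/2\<close> makes the total penalty negligible, since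
  \<open>exp(-\<epsilon>/(2\<mu>)) = \<epsilon>/(nm)\<close>.\<close>
lemma penalty_small:
  assumes "\<And>j. j < m \<Longrightarrow> Ax z j \<le> 1 - \<epsilon> / 2"
  shows "\<mu> * (\<Sum>j<m. pen z j) \<le> \<mu> * \<epsilon>"
proof -
  have "\<epsilon> / (2 * \<mu>) = 2 * \<Lambda>" unfolding mu_eq using eps_pos \<Lambda>_ge by simp
  hence "exp (- (\<epsilon> / (2 * \<mu>))) \<le> exp (- \<Lambda>)" using \<Lambda>_ge by simp
  also have "exp (- \<Lambda>) = \<epsilon> / (real n * real m)"
    using nm_div_eps_pos eps_pos by (simp add: exp_minus)
  finally have exp_le: "exp (- (\<epsilon> / (2 * \<mu>))) \<le> \<epsilon> / (real n * real m)" .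
  have pen_le: "pen z j \<le> \<epsilon> / (real n * real m)" if "j < m" for j
  proof -
    have "(Ax z j - 1) / \<mu> \<le> (- \<epsilon> / 2) / \<mu>"
      using assms[OF that] mu_pos by (intro divide_right_mono) auto
    hence "pen z j \<le> exp (- (\<epsilon> / (2 * \<mu>)))" unfolding pj_def by simp
    thus ?thesis using exp_le by linarith
  qed
  have "(\<Sum>j<m. pen z j) \<le> real m * (\<epsilon> / (real n * real m))"
    using sum_mono[of "{..<m}" "pen z" "\<lambda>_. \<epsilon> / (real n * real m)"] pen_le by simp
  also have "\<dots> = \<epsilon> / real n" using m_pos by simp
  also have "\<dots> \<le> \<epsilon>" using n_pos eps_pos by (simp add: divide_le_eq)
  finally show ?thesis using mu_pos by simp
qed

lemma f_mu_convex: "f\<^sub>\<mu> x + (\<Sum>i<n. (u i - x i) * grad x i) \<le> f\<^sub>\<mu> u"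
proof -
  have pen_tangent: "\<mu> * pen x j + pen x j * (Ax u j - Ax x j) \<le> \<mu> * pen u j" for j
  proof -
    have "pen u j = pen x j * exp ((Ax u j - Ax x j) / \<mu>)"
      unfolding pj_def by (simp add: exp_add[symmetric] diff_divide_distrib)
    moreover have "1 + (Ax u j - Ax x j) / \<mu> \<le> exp ((Ax u j - Ax x j) / \<mu>)" by simp
    ultimately have "pen x j * (1 + (Ax u j - Ax x j) / \<mu>) \<le> pen u j"
      using pen_pos[of x j] by (simp add: mult_left_mono)
    hence "\<mu> * (pen x j * (1 + (Ax u j - Ax x j) / \<mu>)) \<le> \<mu> * pen u j"
      using mu_pos by (simp add: mult_left_mono)
    moreover have "\<mu> * (pen x j * (1 + (Ax u j - Ax x j) / \<mu>)) = \<mu> * pen x j + pen x j * (Ax u j - Ax x j)"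
      using mu_pos by (simp add: field_simps)
    ultimately show ?thesis by simp
  qed
  have "(\<Sum>j<m. pen x j * (Ax u j - Ax x j)) = (\<Sum>j<m. pen x j * matvec n A (\<lambda>i. u i - x i) j)"
    unfolding matvec_def by (simp add: sum_subtractf algebra_simps)
  also have "\<dots> = (\<Sum>i<n. (u i - x i) * (1 + grad x i))"
    by (simp add: sum_mult_matvec_swap sum_A_pen)
  finally have "(\<Sum>j<m. pen x j * (Ax u j - Ax x j)) = (\<Sum>i<n. (u i - x i) * (1 + grad x i))" .
  moreover have "\<mu> * (\<Sum>j<m. pen x j) + (\<Sum>j<m. pen x j * (Ax u j - Ax x j)) \<le> \<mu> * (\<Sum>j<m. pen u j)"
    using pen_tangent by (simp add: sum_distrib_left sum.distrib[symmetric] sum_mono)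
  moreover have "(\<Sum>i<n. (u i - x i) * (1 + grad x i))
      = (\<Sum>i<n. u i) - (\<Sum>i<n. x i) + (\<Sum>i<n. (u i - x i) * grad x i)"
    by (simp add: algebra_simps sum.distrib sum_subtractf)
  ultimately show ?thesis unfolding f_mu_def by linarith
qed

lemma feasible_colnorm_le_1:
  assumes "packing_feasible m n A z" "i < n" shows "col i * z i \<le> 1"
proof -
  obtain j where j: "j < m" "A j i = col i" using colnorm_attained[OF assms(2)] .
  have "A j i * z i \<le> Ax z j"
    using assms j(1) by (intro matvec_ge_term) (auto simp: packing_feasible_def)
  also have "\<dots> \<le> 1" using assms(1) j(1) unfolding packing_feasible_def by auto
  finally show ?thesis using j by simp
qed

lemma feasible_sum_le_n: assumes "packing_feasible m n A z" shows "(\<Sum>i<n. z i) \<le> real n"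
proof -
  have "z i \<le> 1" if "i < n" for i
  proof -
    have "1 * z i \<le> col i * z i"
      using colnorm_ge_1[OF that] that assms unfolding packing_feasible_def by (intro mult_right_mono) auto
    thus ?thesis using feasible_colnorm_le_1[OF assms that] by simp
  qed
  hence "(\<Sum>i<n. z i) \<le> (\<Sum>i<n. 1)" by (intro sum_mono) auto
  thus ?thesis by simp
qed

lemma sum_le_OPT: "packing_feasible m n A z \<Longrightarrow> (\<Sum>i<n. z i) \<le> opt"
  unfolding OPT_def by (rule cSup_upper) (auto simp: bdd_above_def intro: feasible_sum_le_n)

lemma OPT_le:
  assumes "\<And>z. packing_feasible m n A z \<Longrightarrow> (\<Sum>i<n. z i) \<le> B" shows "opt \<le> B"
proof -
  have "packing_feasible m n A (\<lambda>i. 0)" unfolding packing_feasible_def matvec_def by simp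
  thus ?thesis unfolding OPT_def using assms by (intro cSup_least) auto
qed

lemma OPT_ge_1: "1 \<le> opt"
proof -
  obtain i0 where i0: "i0 < n" "col i0 = 1" using ex_colnorm_eq_1 .
  let ?z = "\<lambda>i. if i = i0 then (1::real) else 0"
  have "matvec n A ?z j = A j i0" for j
    using i0 unfolding matvec_def by (simp add: if_distrib cong: if_cong)
  hence "packing_feasible m n A ?z"
    unfolding packing_feasible_def using A_le_colnorm[OF _ i0(1)] i0(2) by auto
  moreover have "(\<Sum>i<n. ?z i) = 1" using i0 by simp
  ultimately show ?thesis using sum_le_OPT by fastforce
qed

text \<open>The invariant of the iteration: \<open>f\<^sub>\<mu> \<le> 1/8\<close> keeps all constraints below \<open>2\<close>
  (\<open>admissible_matvec_le_2\<close>), which bounds the size of a multiplicative step.\<close>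
definition admissible :: "(nat \<Rightarrow> real) \<Rightarrow> bool" where
  "admissible x \<longleftrightarrow> (\<forall>i<n. 0 < x i \<and> col i * x i \<le> 2) \<and> f\<^sub>\<mu> x \<le> 1/8"

lemma admissible_pos: "admissible x \<Longrightarrow> i < n \<Longrightarrow> 0 < x i"
  unfolding admissible_def by auto

lemma x0_pos: "i < n \<Longrightarrow> 0 < x\<^sub>0 i"
  unfolding alg_x0_def using colnorm_ge_1[of i] eps_le_half n_pos by simp

lemma colnorm_mult_x0: "i < n \<Longrightarrow> col i * x\<^sub>0 i = (1 - \<epsilon>/2) / real n"
  unfolding alg_x0_def using colnorm_ge_1[of i] by simp

lemma x0_le: "i < n \<Longrightarrow> x\<^sub>0 i \<le> 1 / real n"
  unfolding alg_x0_def using colnorm_ge_1[of i] eps_pos eps_le_half n_pos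
  by (intro frac_le) auto

lemma matvec_x0_le: "j < m \<Longrightarrow> Ax x\<^sub>0 j \<le> 1 - \<epsilon> / 2"
proof -
  assume j: "j < m"
  have "A j i * x\<^sub>0 i \<le> (1 - \<epsilon>/2) / real n" if "i < n" for i
    using A_le_colnorm[OF j that] x0_pos[OF that] colnorm_mult_x0[OF that]
    by (metis less_imp_le mult_right_mono)
  hence "Ax x\<^sub>0 j \<le> (\<Sum>i<n. (1 - \<epsilon>/2) / real n)" unfolding matvec_def by (intro sum_mono) auto
  thus ?thesis using n_pos by simp
qed

lemma f_mu_x0_le: "f\<^sub>\<mu> x\<^sub>0 \<le> \<mu> * \<epsilon>"
proof -
  have "0 \<le> (\<Sum>i<n. x\<^sub>0 i)" using x0_pos by (intro sum_nonneg) (auto intro: less_imp_le)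
  thus ?thesis unfolding f_mu_def using penalty_small[OF matvec_x0_le] by simp
qed

lemma admissible_x0: "admissible x\<^sub>0"
proof -
  have "col i * x\<^sub>0 i \<le> 2" if "i < n" for i
    using colnorm_mult_x0[OF that] n_pos eps_pos by (simp add: divide_le_eq)
  thus ?thesis unfolding admissible_def using x0_pos f_mu_x0_le mu_eps_le by auto
qed

lemma admissible_sum_le: assumes "admissible x" shows "(\<Sum>i<n. x i) \<le> 2 * real n"
proof -
  have "x i \<le> 2" if "i < n" for i
  proof -
    have "1 * x i \<le> col i * x i"
      using admissible_pos[OF assms that] colnorm_ge_1[OF that] by (intro mult_right_mono) auto
    moreover have "col i * x i \<le> 2" using assms that unfolding admissible_def by auto
    ultimately show ?thesis by linarith
  qed
  hence "(\<Sum>i<n. x i) \<le> (\<Sum>i<n. 2)" by (intro sum_mono) auto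
  thus ?thesis by simp
qed

lemma admissible_matvec_le_2: assumes "admissible x" "j < m" shows "Ax x j \<le> 2"
proof -
  have "pen x j \<le> (\<Sum>j<m. pen x j)"
    using assms(2) pen_pos by (intro member_le_sum) (auto intro: less_imp_le)
  hence "\<mu> * pen x j \<le> \<mu> * (\<Sum>j<m. pen x j)" using mu_pos by simp
  also have "\<dots> = f\<^sub>\<mu> x + (\<Sum>i<n. x i)" unfolding f_mu_def by simp
  also have "\<dots> \<le> 2 * real n + 1" using assms(1) admissible_sum_le[OF assms(1)] unfolding admissible_def by simp
  finally have "pen x j \<le> (2 * real n + 1) / \<mu>" using mu_pos by (simp add: field_simps)
  also have "\<dots> \<le> exp (1 / \<mu>)" by (rule exp_inv_mu_ge)
  finally have "(Ax x j - 1) / \<mu> \<le> 1 / \<mu>" unfolding pj_def by simp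
  hence "Ax x j - 1 \<le> 1" using mu_pos by (simp add: divide_le_cancel)
  thus ?thesis by simp
qed

lemma admissible_sum_le_OPT: assumes "admissible x" shows "(\<Sum>i<n. x i) \<le> 2 * opt"
proof -
  have "packing_feasible m n A (\<lambda>i. x i / 2)"
    unfolding packing_feasible_def matvec_def
    using admissible_pos[OF assms] admissible_matvec_le_2[OF assms]
    by (auto simp: sum_divide_distrib[symmetric] matvec_def intro: less_imp_le)
  hence "(\<Sum>i<n. x i / 2) \<le> opt" by (rule sum_le_OPT)
  thus ?thesis by (simp add: sum_divide_distrib[symmetric])
qed

abbreviation "width t \<equiv> min 1 (\<epsilon> * 2 ^ (t + 1))"

lemma bucket_props:
  fixes t :: nat and x :: "nat \<Rightarrow> real"
  assumes "i < n"
  defines "v \<equiv> bucket t x i" and "g \<equiv> grad x i"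
  shows "\<bar>v\<bar> \<le> width t" "\<bar>v\<bar> * width t \<le> 2 * v\<^sup>2" "0 \<le> v * g" "v\<^sup>2 * (1 + g) \<le> 2 * (v * g)"
    "\<bar>v\<bar> \<le> 1" "0 < v \<Longrightarrow> 0 < g" "v < 0 \<Longrightarrow> g < 0"
proof -
  note X = xi_trunc_props[OF eps_pos eps_le_half grad_ge[OF assms(1)]]
  note B = xi_bucket_cases[of \<epsilon> t "\<xi> x i"]
  show "\<bar>v\<bar> \<le> width t" "0 \<le> v * g" "v\<^sup>2 * (1 + g) \<le> 2 * (v * g)" "\<bar>v\<bar> \<le> 1"
    "0 < v \<Longrightarrow> 0 < g" "v < 0 \<Longrightarrow> g < 0"
    using B X eps_pos unfolding v_def g_def by auto
  show "\<bar>v\<bar> * width t \<le> 2 * v\<^sup>2"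
  proof (cases "v = 0")
    case False
    hence "\<epsilon> * 2 ^ t < \<bar>v\<bar>" using B unfolding v_def by auto
    hence "width t \<le> 2 * \<bar>v\<bar>" by simp
    hence "\<bar>v\<bar> * width t \<le> \<bar>v\<bar> * (2 * \<bar>v\<bar>)" by (intro mult_left_mono) auto
    thus ?thesis by (simp add: power2_eq_square)
  qed simp
qed

lemma step_change_abs:
  assumes "\<bar>v\<bar> \<le> 1" "0 \<le> y"
  shows "\<bar>y * (exp (- \<alpha> * v) - 1)\<bar> \<le> 1.1 * \<alpha> * (y * \<bar>v\<bar>)"
proof -
  have av: "\<bar>- \<alpha> * v\<bar> = \<alpha> * \<bar>v\<bar>" "\<alpha> * \<bar>v\<bar> \<le> \<alpha>"
    using assms(1) alpha_pos by (auto simp: abs_mult mult_le_cancel_left1)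
  have "\<bar>exp (- \<alpha> * v) - 1\<bar> \<le> (\<alpha> * \<bar>v\<bar>) * exp (\<alpha> * \<bar>v\<bar>)"
    using abs_exp_minus_one_le[of "- \<alpha> * v"] av(1) by simp
  also have "\<dots> \<le> (\<alpha> * \<bar>v\<bar>) * 1.1"
  proof (rule mult_left_mono)
    have "exp (\<alpha> * \<bar>v\<bar>) \<le> exp \<alpha>" using av(2) by simp
    thus "exp (\<alpha> * \<bar>v\<bar>) \<le> 1.1" using exp_alpha_le by linarith
  qed (use alpha_pos in simp)
  finally have "y * \<bar>exp (- \<alpha> * v) - 1\<bar> \<le> y * ((\<alpha> * \<bar>v\<bar>) * 1.1)" using assms(2) by (intro mult_left_mono)
  moreover have "\<bar>y * (exp (- \<alpha> * v) - 1)\<bar> = y * \<bar>exp (- \<alpha> * v) - 1\<bar>"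
    using assms(2) by (simp add: abs_mult)
  ultimately have "\<bar>y * (exp (- \<alpha> * v) - 1)\<bar> \<le> y * ((\<alpha> * \<bar>v\<bar>) * 1.1)" by linarith
  thus ?thesis by (simp only: mult_ac)
qed

text \<open>Because \<open>\<alpha>\<close> is small, a coordinate moving against its gradient gains at least
  \<open>0.99\<close> of the first-order decrease.\<close>
lemma step_change_mult_grad:
  assumes "0 \<le> y" "\<bar>v\<bar> \<le> 1" "0 < v \<Longrightarrow> 0 < g" "v < 0 \<Longrightarrow> g < 0" "0 \<le> v * g"
  shows "y * (exp (- \<alpha> * v) - 1) * g \<le> - 0.99 * \<alpha> * (y * (v * g))"
proof -
  consider "v = 0" | "0 < v" | "v < 0" by linarith
  thus ?thesis
  proof cases
    case 2
    have av: "0 \<le> \<alpha> * v" "\<alpha> * v \<le> \<alpha>" using 2 alpha_pos assms(2) by (auto simp: mult_le_cancel_left1)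
    have "(\<alpha> * v)\<^sup>2 \<le> (\<alpha> * v) * 0.011"
      unfolding power2_eq_square using av alpha_le by (intro mult_left_mono) auto
    hence "(\<alpha> * v)\<^sup>2 / 2 \<le> 0.01 * (\<alpha> * v)" using av by simp
    moreover have "exp (- (\<alpha> * v)) \<le> 1 - \<alpha> * v + (\<alpha> * v)\<^sup>2 / 2"
      by (rule exp_minus_le_quadratic) (use av in simp)
    ultimately have "exp (- \<alpha> * v) - 1 \<le> - 0.99 * (\<alpha> * v)" by simp
    hence "y * (exp (- \<alpha> * v) - 1) \<le> y * (- 0.99 * (\<alpha> * v))" using assms(1) by (intro mult_left_mono)
    hence "y * (exp (- \<alpha> * v) - 1) * g \<le> y * (- 0.99 * (\<alpha> * v)) * g"
      using assms(3)[OF 2] by (intro mult_right_mono) auto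
    thus ?thesis by (simp add: algebra_simps)
  next
    case 3
    have "y * (- \<alpha> * v) \<le> y * (exp (- \<alpha> * v) - 1)"
      using assms(1) exp_ge_add_one_self[of "- \<alpha> * v"] by (intro mult_left_mono) auto
    hence "y * (exp (- \<alpha> * v) - 1) * g \<le> y * (- \<alpha> * v) * g"
      using assms(4)[OF 3] by (intro mult_right_mono_neg) auto
    moreover have "0 \<le> \<alpha> * (y * (v * g))" using alpha_pos assms(1,5) by simp
    ultimately show ?thesis by (simp add: algebra_simps)
  qed simp
qed

lemma matvec_step_change:
  "Ax (step t x) j - Ax x j = matvec n A (\<lambda>i. x i * (exp (- \<alpha> * bucket t x i) - 1)) j"
  unfolding matvec_def alg_step_def by (simp add: algebra_simps sum_subtractf[symmetric])

lemma row_bucket_mass: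
  fixes t :: nat
  assumes "admissible x" "j < m"
  defines "R \<equiv> (\<Sum>i<n. A j i * (x i * \<bar>bucket t x i\<bar>))"
  shows "0 \<le> R" "R \<le> 2 * width t" "R * width t \<le> 2 * (\<Sum>i<n. A j i * (x i * (bucket t x i)\<^sup>2))"
proof -
  have x0: "0 \<le> x i" if "i < n" for i using admissible_pos[OF assms(1) that] by simp
  have A0: "0 \<le> A j i" if "i < n" for i using A_nonneg[OF assms(2) that] .
  show "0 \<le> R" unfolding R_def using x0 A0 by (intro sum_nonneg) auto
  have "R \<le> (\<Sum>i<n. A j i * (x i * width t))" unfolding R_def
    using bucket_props(1) x0 A0 by (intro sum_mono mult_left_mono) auto
  also have "\<dots> = width t * Ax x j" unfolding matvec_def by (simp add: sum_distrib_right mult_ac)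
  also have "\<dots> \<le> width t * 2" using admissible_matvec_le_2[OF assms(1,2)] eps_pos by (intro mult_left_mono) auto
  finally show "R \<le> 2 * width t" by simp
  have "R * width t = (\<Sum>i<n. A j i * x i * (\<bar>bucket t x i\<bar> * width t))"
    unfolding R_def sum_distrib_right by (simp add: mult_ac)
  also have "\<dots> \<le> (\<Sum>i<n. A j i * x i * (2 * (bucket t x i)\<^sup>2))"
    using bucket_props(2) x0 A0 by (intro sum_mono mult_left_mono) auto
  also have "\<dots> = 2 * (\<Sum>i<n. A j i * (x i * (bucket t x i)\<^sup>2))" by (simp add: sum_distrib_left mult_ac)
  finally show "R * width t \<le> 2 * (\<Sum>i<n. A j i * (x i * (bucket t x i)\<^sup>2))" .
qed

lemma matvec_step_change_abs:
  assumes "admissible x" "j < m"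
  shows "\<bar>Ax (step t x) j - Ax x j\<bar> \<le> 1.1 * \<alpha> * (\<Sum>i<n. A j i * (x i * \<bar>bucket t x i\<bar>))"
proof -
  have "\<bar>Ax (step t x) j - Ax x j\<bar> \<le> (\<Sum>i<n. \<bar>A j i * (x i * (exp (- \<alpha> * bucket t x i) - 1))\<bar>)"
    unfolding matvec_step_change unfolding matvec_def by (rule sum_abs)
  also have "\<dots> = (\<Sum>i<n. A j i * \<bar>x i * (exp (- \<alpha> * bucket t x i) - 1)\<bar>)"
    using A_nonneg[OF assms(2)] by (intro sum.cong) (auto simp: abs_mult)
  also have "\<dots> \<le> (\<Sum>i<n. A j i * (1.1 * \<alpha> * (x i * \<bar>bucket t x i\<bar>)))"
  proof (intro sum_mono mult_left_mono)
    fix i assume "i \<in> {..<n}"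
    thus "\<bar>x i * (exp (- \<alpha> * bucket t x i) - 1)\<bar> \<le> 1.1 * \<alpha> * (x i * \<bar>bucket t x i\<bar>)"
      using step_change_abs bucket_props(5) admissible_pos[OF assms(1)] by (simp add: less_imp_le)
    show "0 \<le> A j i" using A_nonneg[OF assms(2)] \<open>i \<in> {..<n}\<close> by simp
  qed
  also have "\<dots> = 1.1 * \<alpha> * (\<Sum>i<n. A j i * (x i * \<bar>bucket t x i\<bar>))"
    by (simp add: sum_distrib_left mult_ac)
  finally show ?thesis .
qed

text \<open>Second-order bound for one penalty term; the constraint moves by at most \<open>0.11 \<mu>\<close>
  because the step changes each moved coordinate by a relative amount \<open>O(\<alpha> width t)\<close>.\<close>
lemma step_penalty_change:
  assumes "admissible x" "j < m"
  shows "\<mu> * (pen (step t x) j - pen x j)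
    \<le> pen x j * (Ax (step t x) j - Ax x j) + 0.242 * \<alpha> * (pen x j * (\<Sum>i<n. A j i * (x i * (bucket t x i)\<^sup>2)))"
proof -
  define D where "D = Ax (step t x) j - Ax x j"
  define R where "R = (\<Sum>i<n. A j i * (x i * \<bar>bucket t x i\<bar>))"
  define Q where "Q = (\<Sum>i<n. A j i * (x i * (bucket t x i)\<^sup>2))"
  note RM = row_bucket_mass[OF assms, of t, folded R_def Q_def]
  have D_le: "\<bar>D\<bar> \<le> 1.1 * \<alpha> * R"
    unfolding D_def R_def using matvec_step_change_abs[OF assms] .
  have "\<bar>D / \<mu>\<bar> = \<bar>D\<bar> / \<mu>" using mu_pos by simp
  also have "\<dots> \<le> 1.1 * \<alpha> * R / \<mu>" using D_le mu_pos by (intro divide_right_mono) auto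
  also have "\<dots> = 1.1 * R / 20" unfolding alpha_eq using mu_pos by simp
  also have "\<dots> \<le> 0.11 * width t" using RM(2) by simp
  finally have D_mu: "\<bar>D / \<mu>\<bar> \<le> 0.11 * width t" .
  have "\<mu> * (D / \<mu>)\<^sup>2 = (\<mu> * \<bar>D / \<mu>\<bar>) * \<bar>D / \<mu>\<bar>" by (simp add: power2_eq_square abs_mult_self)
  also have "\<dots> \<le> (1.1 * \<alpha> * R) * (0.11 * width t)"
  proof (rule mult_mono)
    show "\<mu> * \<bar>D / \<mu>\<bar> \<le> 1.1 * \<alpha> * R" using D_le mu_pos by (simp add: abs_divide)
  qed (use D_mu RM(1) alpha_pos in auto)
  also have "\<dots> = 0.121 * \<alpha> * (R * width t)" by simp
  also have "\<dots> \<le> 0.242 * \<alpha> * Q" using RM(3) alpha_pos by simp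
  finally have sq: "\<mu> * (D / \<mu>)\<^sup>2 \<le> 0.242 * \<alpha> * Q" .
  have "0.11 * width t \<le> 1" by simp
  hence "\<bar>D / \<mu>\<bar> \<le> 1" using D_mu by linarith
  hence "exp (D / \<mu>) - 1 \<le> D / \<mu> + (D / \<mu>)\<^sup>2" using exp_le_quadratic by fastforce
  hence "\<mu> * pen x j * (exp (D / \<mu>) - 1) \<le> \<mu> * pen x j * (D / \<mu> + (D / \<mu>)\<^sup>2)"
    using mu_pos pen_pos[of x j] by (intro mult_left_mono) auto
  also have "\<dots> = pen x j * D + pen x j * (\<mu> * (D / \<mu>)\<^sup>2)" using mu_pos by (simp add: algebra_simps)
  also have "\<dots> \<le> pen x j * D + pen x j * (0.242 * \<alpha> * Q)"
    using sq pen_pos[of x j] by (intro add_left_mono mult_left_mono) auto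
  finally have "\<mu> * pen x j * (exp (D / \<mu>) - 1) \<le> pen x j * D + pen x j * (0.242 * \<alpha> * Q)" .
  moreover have "pen (step t x) j = pen x j * exp (D / \<mu>)"
    unfolding pj_def D_def by (simp add: exp_add[symmetric] diff_divide_distrib)
  ultimately show ?thesis unfolding D_def[symmetric] Q_def[symmetric] by (simp add: algebra_simps)
qed

lemma coordinate_descent:
  fixes t :: nat
  assumes "admissible x" "i < n"
  defines "v \<equiv> bucket t x i" and "g \<equiv> grad x i"
  shows "x i * (exp (- \<alpha> * v) - 1) * g + 0.242 * \<alpha> * (x i * (v\<^sup>2 * (1 + g)))
    \<le> - (\<alpha> / 2) * (x i * (v * g))"
proof -
  have x0: "0 \<le> x i" using admissible_pos[OF assms(1,2)] by simp
  note vp = bucket_props[OF assms(2), of t x, folded v_def g_def]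
  define P where "P = \<alpha> * (x i * (v * g))"
  have "x i * (exp (- \<alpha> * v) - 1) * g \<le> - 0.99 * \<alpha> * (x i * (v * g))"
    using step_change_mult_grad[OF x0 vp(5,6,7,3)] .
  hence a: "x i * (exp (- \<alpha> * v) - 1) * g \<le> - (99/100) * P" unfolding P_def by simp
  have "x i * (v\<^sup>2 * (1 + g)) \<le> x i * (2 * (v * g))"
    using vp(4) x0 by (intro mult_left_mono) auto
  hence "0.242 * \<alpha> * (x i * (v\<^sup>2 * (1 + g))) \<le> 0.242 * \<alpha> * (x i * (2 * (v * g)))"
    by (rule mult_left_mono) (use alpha_pos in auto)
  hence b: "0.242 * \<alpha> * (x i * (v\<^sup>2 * (1 + g))) \<le> (484/1000) * P" unfolding P_def by simp
  have "0 \<le> P" unfolding P_def using alpha_pos x0 vp(3) by simp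
  thus ?thesis using a b unfolding P_def by linarith
qed

lemma descent:
  assumes "admissible x"
  shows "f\<^sub>\<mu> (step t x) \<le> f\<^sub>\<mu> x - \<alpha> / 2 * (\<Sum>i<n. x i * (bucket t x i * grad x i))"
proof -
  define v where "v i = bucket t x i" for i
  define g where "g i = grad x i" for i
  define d where "d i = x i * (exp (- \<alpha> * v i) - 1)" for i
  define q where "q i = x i * (v i)\<^sup>2" for i
  have "f\<^sub>\<mu> (step t x) - f\<^sub>\<mu> x = - (\<Sum>i<n. d i) + (\<Sum>j<m. \<mu> * (pen (step t x) j - pen x j))"
    unfolding f_mu_def alg_step_def d_def v_def
    by (simp add: sum.distrib sum_subtractf sum_distrib_left algebra_simps)
  also have "\<dots> \<le> - (\<Sum>i<n. d i) + (\<Sum>j<m. pen x j * matvec n A d j + 0.242 * \<alpha> * (pen x j * matvec n A q j))"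
    using step_penalty_change[OF assms] unfolding matvec_step_change
    by (intro add_left_mono sum_mono) (simp add: d_def v_def q_def matvec_def)
  also have "\<dots> = - (\<Sum>i<n. d i) + (\<Sum>i<n. d i * (1 + g i)) + 0.242 * \<alpha> * (\<Sum>i<n. q i * (1 + g i))"
    unfolding sum.distrib sum_distrib_left[symmetric] sum_mult_matvec_swap g_def sum_A_pen
    by (simp add: sum_distrib_left mult_ac)
  also have "\<dots> = (\<Sum>i<n. d i * g i + 0.242 * \<alpha> * (x i * ((v i)\<^sup>2 * (1 + g i))))"
  proof -
    have "(\<Sum>i<n. d i * (1 + g i)) = (\<Sum>i<n. d i) + (\<Sum>i<n. d i * g i)"
      by (simp add: distrib_left sum.distrib)
    moreover have "0.242 * \<alpha> * (\<Sum>i<n. q i * (1 + g i)) = (\<Sum>i<n. 0.242 * \<alpha> * (x i * ((v i)\<^sup>2 * (1 + g i))))"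
      unfolding sum_distrib_left q_def by (simp only: mult_ac)
    ultimately show ?thesis by (simp add: sum.distrib)
  qed
  also have "\<dots> \<le> (\<Sum>i<n. - (\<alpha> / 2) * (x i * (v i * g i)))"
    using coordinate_descent[OF assms, of _ t] unfolding d_def v_def g_def by (intro sum_mono) simp
  also have "\<dots> = - (\<alpha> / 2) * (\<Sum>i<n. x i * (bucket t x i * grad x i))"
    unfolding v_def g_def by (simp add: sum_distrib_left)
  finally show ?thesis by simp
qed

lemma descent_weight_nonneg:
  assumes "admissible x" shows "0 \<le> (\<Sum>i<n. x i * (bucket t x i * grad x i))"
proof (rule sum_nonneg)
  fix i assume "i \<in> {..<n}"
  hence "0 \<le> x i" "0 \<le> bucket t x i * grad x i"
    using admissible_pos[OF assms] bucket_props(3) by (auto intro: less_imp_le)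
  thus "0 \<le> x i * (bucket t x i * grad x i)" by (rule mult_nonneg_nonneg)
qed

lemma f_mu_step_le: assumes "admissible x" shows "f\<^sub>\<mu> (step t x) \<le> f\<^sub>\<mu> x"
proof -
  have "0 \<le> \<alpha> / 2 * (\<Sum>i<n. x i * (bucket t x i * grad x i))"
    using descent_weight_nonneg[OF assms] alpha_pos by simp
  thus ?thesis using descent[OF assms, of t] by linarith
qed

text \<open>A coordinate with \<open>col i * x i \<ge> 3/2\<close> violates some constraint by \<open>1/2\<close>, so its gradient
  exceeds \<open>1\<close> and the step can only shrink it; otherwise it grows by at most \<open>e\<^sup>\<alpha> \<le> 1.1\<close>.\<close>
lemma admissible_step: assumes "admissible x" shows "admissible (step t x)"
proof -
  have x0: "0 < x i" if "i < n" for i using admissible_pos[OF assms that] .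
  have "col i * step t x i \<le> 2" if i: "i < n" for i
  proof (cases "3/2 \<le> col i * x i")
    case True
    obtain j where j: "j < m" "A j i = col i" using colnorm_attained[OF i] .
    have "col i * x i \<le> Ax x j" using matvec_ge_term[of x j i] x0 j i by (auto intro: less_imp_le)
    hence "1 / (2 * \<mu>) \<le> (Ax x j - 1) / \<mu>" using True mu_pos by (simp add: field_simps)
    hence "exp (1 / (2 * \<mu>)) \<le> pen x j" unfolding pj_def by simp
    moreover have "1 + 1 / (2 * \<mu>) \<le> exp (1 / (2 * \<mu>))" by (rule exp_ge_add_one_self)
    moreover have "2 \<le> 1 / (2 * \<mu>)" using mu_le mu_pos by (simp add: field_simps)
    ultimately have "3 \<le> pen x j" by linarith
    hence "col i * 3 \<le> A j i * pen x j" unfolding j(2) by (rule mult_left_mono) (use colnorm_ge_1[OF i] in auto)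
    moreover have "A j i * pen x j \<le> (\<Sum>j<m. A j i * pen x j)"
      using A_nonneg i pen_pos j by (intro member_le_sum mult_nonneg_nonneg) (auto intro: less_imp_le)
    ultimately have "1 < grad x i" using colnorm_ge_1[OF i] unfolding grad_f_def by simp
    hence "bucket t x i = 0 \<or> bucket t x i = 1" unfolding xi_trunc_def xi_bucket_def using eps_le_half by simp
    hence "exp (- \<alpha> * bucket t x i) \<le> 1" using alpha_pos by auto
    hence "step t x i \<le> x i" unfolding alg_step_def using x0[OF i] by (simp add: mult_le_cancel_left1)
    hence "col i * step t x i \<le> col i * x i" using colnorm_ge_1[OF i] by (intro mult_left_mono) auto
    thus ?thesis using assms i unfolding admissible_def by auto
  next
    case False
    have "- bucket t x i \<le> 1" using bucket_props(5)[OF i, of t x] by linarith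
    hence "\<alpha> * (- bucket t x i) \<le> \<alpha> * 1" using alpha_pos by (intro mult_left_mono) auto
    hence "- \<alpha> * bucket t x i \<le> \<alpha>" by simp
    hence "exp (- \<alpha> * bucket t x i) \<le> 1.1" using exp_alpha_le by (meson exp_le_cancel_iff order_trans)
    hence "col i * x i * exp (- \<alpha> * bucket t x i) \<le> col i * x i * 1.1"
      using x0[OF i] colnorm_ge_1[OF i] by (intro mult_left_mono) auto
    thus ?thesis using False unfolding alg_step_def by (simp add: mult.assoc)
  qed
  moreover have "0 < step t x i" if "i < n" for i using x0[OF that] unfolding alg_step_def by simp
  ultimately show ?thesis
    using assms f_mu_step_le[OF assms, of t] unfolding admissible_def by auto
qed

lemma admissible_iter: "admissible (alg_iter m n A \<epsilon> ts k)"
  by (induction k) (auto simp: admissible_x0 admissible_step)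

subsection \<open>The entropic potential\<close>

definition potential :: "(nat \<Rightarrow> real) \<Rightarrow> (nat \<Rightarrow> real) \<Rightarrow> real" where
  "potential u x = (\<Sum>i<n. x i - u i * ln (x i))"

lemma potential_step_le:
  assumes "admissible x"
  shows "potential u (step t x) - potential u x
    \<le> (\<Sum>i<n. x i * (- \<alpha> * bucket t x i + \<alpha>\<^sup>2 * (bucket t x i)\<^sup>2) + \<alpha> * u i * bucket t x i)"
  unfolding potential_def sum_subtractf[symmetric]
proof (rule sum_mono)
  fix i assume "i \<in> {..<n}"
  hence i: "i < n" by simp
  have "\<bar>- \<alpha> * bucket t x i\<bar> \<le> \<alpha> * 1"
    using bucket_props(5)[OF i] alpha_pos by (simp add: abs_mult mult_left_mono)
  hence "\<bar>- \<alpha> * bucket t x i\<bar> \<le> 1" using alpha_le by simp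
  hence "exp (- \<alpha> * bucket t x i) - 1 \<le> - \<alpha> * bucket t x i + (- \<alpha> * bucket t x i)\<^sup>2"
    using exp_le_quadratic by fastforce
  hence "x i * (exp (- \<alpha> * bucket t x i) - 1) \<le> x i * (- \<alpha> * bucket t x i + \<alpha>\<^sup>2 * (bucket t x i)\<^sup>2)"
    using admissible_pos[OF assms i] by (intro mult_left_mono) (auto simp: power_mult_distrib)
  hence diff: "step t x i - x i \<le> x i * (- \<alpha> * bucket t x i + \<alpha>\<^sup>2 * (bucket t x i)\<^sup>2)"
    unfolding alg_step_def by (simp add: algebra_simps)
  have ln_step: "ln (step t x i) = ln (x i) - \<alpha> * bucket t x i"
    using admissible_pos[OF assms i] unfolding alg_step_def by (simp add: ln_mult)
  show "step t x i - u i * ln (step t x i) - (x i - u i * ln (x i))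
      \<le> x i * (- \<alpha> * bucket t x i + \<alpha>\<^sup>2 * (bucket t x i)\<^sup>2) + \<alpha> * u i * bucket t x i"
    unfolding ln_step using diff by (simp add: algebra_simps)
qed

lemma potential_ge:
  assumes u: "\<And>i. i < n \<Longrightarrow> 0 \<le> u i" and x: "\<And>i. i < n \<Longrightarrow> 0 < x i"
  shows "(\<Sum>i<n. u i - u i * ln (u i)) \<le> potential u x"
  unfolding potential_def
proof (rule sum_mono)
  fix i assume "i \<in> {..<n}"
  hence xp: "0 < x i" and u0: "0 \<le> u i" using u x by auto
  show "u i - u i * ln (u i) \<le> x i - u i * ln (x i)"
  proof (cases "u i = 0")
    case False
    hence up: "0 < u i" using u0 by simp
    have "ln (x i) - ln (u i) \<le> x i / u i - 1"
      using ln_le_minus_one[of "x i / u i"] xp up by (simp add: ln_div)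
    hence "u i * (ln (x i) - ln (u i)) \<le> u i * (x i / u i - 1)" using up by (intro mult_left_mono) auto
    thus ?thesis using up by (simp add: algebra_simps)
  qed (use xp in simp)
qed

text \<open>Since \<open>col i * z i \<le> 1\<close>, the comparison point satisfies \<open>u i \<le> n x\<^sub>0 i\<close>, whence the
  \<open>ln n\<close>.\<close>
lemma potential_x0_le:
  assumes feas: "packing_feasible m n A z"
  defines "u \<equiv> \<lambda>i. (1 - \<epsilon>/2) * z i"
  shows "potential u x\<^sub>0 - (\<Sum>i<n. u i - u i * ln (u i)) \<le> 1 + (\<Sum>i<n. u i) * ln (real n)"
proof -
  have "potential u x\<^sub>0 - (\<Sum>i<n. u i - u i * ln (u i)) = (\<Sum>i<n. x\<^sub>0 i - u i + u i * (ln (u i) - ln (x\<^sub>0 i)))"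
    unfolding potential_def sum_subtractf[symmetric] by (rule sum.cong) (simp_all add: algebra_simps)
  also have "\<dots> \<le> (\<Sum>i<n. x\<^sub>0 i + u i * ln (real n))"
  proof (rule sum_mono)
    fix i assume "i \<in> {..<n}"
    hence i: "i < n" by simp
    have e2: "0 < 1 - \<epsilon>/2" using eps_le_half by simp
    have u0: "0 \<le> u i" unfolding u_def using feas i e2 unfolding packing_feasible_def by simp
    have "u i * (ln (u i) - ln (x\<^sub>0 i)) \<le> u i * ln (real n)"
    proof (cases "u i = 0")
      case False
      hence up: "0 < u i" using u0 by simp
      have c1: "1 \<le> col i" using colnorm_ge_1[OF i] .
      have "z i \<le> 1 / col i" using feasible_colnorm_le_1[OF feas i] c1 by (simp add: field_simps)
      hence "u i \<le> (1 - \<epsilon>/2) * (1 / col i)" unfolding u_def using e2 by (intro mult_left_mono) auto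
      also have "\<dots> = real n * x\<^sub>0 i" unfolding alg_x0_def using n_pos c1 by (simp add: field_simps)
      finally have "ln (u i) \<le> ln (real n * x\<^sub>0 i)" using up by simp
      also have "\<dots> = ln (real n) + ln (x\<^sub>0 i)" using n_pos x0_pos[OF i] by (simp add: ln_mult)
      finally have "ln (u i) - ln (x\<^sub>0 i) \<le> ln (real n)" by simp
      thus ?thesis using up by (intro mult_left_mono) auto
    qed simp
    thus "x\<^sub>0 i - u i + u i * (ln (u i) - ln (x\<^sub>0 i)) \<le> x\<^sub>0 i + u i * ln (real n)" using u0 by simp
  qed
  also have "\<dots> = (\<Sum>i<n. x\<^sub>0 i) + (\<Sum>i<n. u i) * ln (real n)"
    by (simp add: sum.distrib sum_distrib_right)
  also have "\<dots> \<le> 1 + (\<Sum>i<n. u i) * ln (real n)"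
  proof -
    have "(\<Sum>i<n. x\<^sub>0 i) \<le> (\<Sum>i<n. 1 / real n)" by (intro sum_mono) (use x0_le in auto)
    thus ?thesis using n_pos by simp
  qed
  finally show ?thesis .
qed

lemma sum_buckets:
  fixes F :: "nat \<Rightarrow> real \<Rightarrow> real"
  assumes "\<And>i. F i 0 = 0"
  shows "(\<Sum>t<w. \<Sum>i<n. F i (bucket t x i)) = (\<Sum>i<n. F i (\<xi> x i))"
proof -
  have "(\<Sum>t<w. F i (bucket t x i)) = F i (\<xi> x i)" if "i < n" for i
    using sum_xi_bucket[of "F i", OF assms eps_pos eps_2_pow_w
        xi_trunc_props(2)[OF eps_pos eps_le_half grad_ge[OF that]]] .
  thus ?thesis by (subst sum.swap) simp
qed

lemma avg_potential_step_le:
  assumes "admissible x" and u_nonneg: "\<And>i. i < n \<Longrightarrow> 0 \<le> u i"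
  shows "(\<Sum>t<w. potential u (step t x)) - real w * potential u x
    \<le> \<alpha> * (\<Sum>i<n. (u i - x i) * grad x i) + \<alpha> * \<epsilon> * ((\<Sum>i<n. x i) + (\<Sum>i<n. u i))
      + (\<alpha> + \<alpha>\<^sup>2) * (\<Sum>i<n. x i * (\<xi> x i * grad x i))"
proof -
  define F where "F i z = x i * (- \<alpha> * z + \<alpha>\<^sup>2 * z\<^sup>2) + \<alpha> * u i * z" for i z
  have "(\<Sum>t<w. potential u (step t x)) - real w * potential u x = (\<Sum>t<w. potential u (step t x) - potential u x)"
    by (simp add: sum_subtractf)
  also have "\<dots> \<le> (\<Sum>t<w. \<Sum>i<n. F i (bucket t x i))"
    unfolding F_def by (intro sum_mono potential_step_le[OF assms(1)])
  also have "\<dots> = (\<Sum>i<n. F i (\<xi> x i))" by (rule sum_buckets) (simp add: F_def)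
  also have "\<dots> \<le> (\<Sum>i<n. \<alpha> * ((u i - x i) * grad x i) + \<alpha> * \<epsilon> * (x i + u i) + (\<alpha> + \<alpha>\<^sup>2) * (x i * (\<xi> x i * grad x i)))"
  proof (rule sum_mono)
    fix i assume "i \<in> {..<n}"
    hence i: "i < n" by simp
    have x0: "0 \<le> x i" using admissible_pos[OF assms(1) i] by simp
    have "(u i - x i) * \<xi> x i \<le> (u i - x i) * grad x i + \<epsilon> * (x i + u i) + x i * (\<xi> x i * grad x i)"
      using xi_trunc_comparison[OF eps_pos grad_ge[OF i] x0 u_nonneg[OF i]] .
    hence "\<alpha> * ((u i - x i) * \<xi> x i) \<le> \<alpha> * ((u i - x i) * grad x i + \<epsilon> * (x i + u i) + x i * (\<xi> x i * grad x i))"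
      by (rule mult_left_mono) (use alpha_pos in simp)
    moreover have "x i * (\<xi> x i)\<^sup>2 \<le> x i * (\<xi> x i * grad x i)"
      using mult_left_mono[OF xi_trunc_props(4)[OF eps_pos eps_le_half grad_ge[OF i]] x0] .
    hence "\<alpha>\<^sup>2 * (x i * (\<xi> x i)\<^sup>2) \<le> \<alpha>\<^sup>2 * (x i * (\<xi> x i * grad x i))" by (rule mult_left_mono) simp
    moreover have "F i (\<xi> x i) = \<alpha> * ((u i - x i) * \<xi> x i) + \<alpha>\<^sup>2 * (x i * (\<xi> x i)\<^sup>2)"
      unfolding F_def by (simp add: algebra_simps)
    ultimately show "F i (\<xi> x i) \<le> \<alpha> * ((u i - x i) * grad x i) + \<alpha> * \<epsilon> * (x i + u i) + (\<alpha> + \<alpha>\<^sup>2) * (x i * (\<xi> x i * grad x i))"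
      by (simp add: algebra_simps)
  qed
  also have "\<dots> = \<alpha> * (\<Sum>i<n. (u i - x i) * grad x i) + \<alpha> * \<epsilon> * ((\<Sum>i<n. x i) + (\<Sum>i<n. u i))
      + (\<alpha> + \<alpha>\<^sup>2) * (\<Sum>i<n. x i * (\<xi> x i * grad x i))"
  proof -
    have "(\<Sum>i<n. \<alpha> * \<epsilon> * (x i + u i)) = \<alpha> * \<epsilon> * ((\<Sum>i<n. x i) + (\<Sum>i<n. u i))"
      unfolding sum.distrib[symmetric] sum_distrib_left ..
    thus ?thesis by (simp add: sum.distrib sum_distrib_left)
  qed
  finally show ?thesis .
qed

lemma avg_f_mu_step_le:
  assumes "admissible x"
  shows "(\<Sum>t<w. f\<^sub>\<mu> (step t x)) \<le> real w * f\<^sub>\<mu> x - \<alpha> / 2 * (\<Sum>i<n. x i * (\<xi> x i * grad x i))"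
proof -
  have "(\<Sum>t<w. f\<^sub>\<mu> (step t x)) \<le> (\<Sum>t<w. f\<^sub>\<mu> x - \<alpha> / 2 * (\<Sum>i<n. x i * (bucket t x i * grad x i)))"
    by (intro sum_mono descent[OF assms])
  also have "\<dots> = real w * f\<^sub>\<mu> x - \<alpha> / 2 * (\<Sum>t<w. \<Sum>i<n. x i * (bucket t x i * grad x i))"
    by (simp add: sum_subtractf sum_distrib_left)
  also have "(\<Sum>t<w. \<Sum>i<n. x i * (bucket t x i * grad x i)) = (\<Sum>i<n. x i * (\<xi> x i * grad x i))"
    by (rule sum_buckets) simp
  finally show ?thesis .
qed

text \<open>With the weight \<open>C = 2(1 + \<alpha>)\<close> the second-order terms of the potential are paid for by
  the descent of \<open>f\<^sub>\<mu>\<close>, and convexity of \<open>f\<^sub>\<mu>\<close> turns the first-order term into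
  \<open>f\<^sub>\<mu>(u) - f\<^sub>\<mu>(x)\<close>.\<close>
lemma avg_step_le:
  assumes "admissible x" and u_nonneg: "\<And>i. i < n \<Longrightarrow> 0 \<le> u i"
  defines "C \<equiv> 2 * (1 + \<alpha>)"
  shows "(\<Sum>t<w. potential u (step t x) + C * f\<^sub>\<mu> (step t x))
    \<le> real w * (potential u x + C * f\<^sub>\<mu> x) + \<alpha> * (f\<^sub>\<mu> u - f\<^sub>\<mu> x)
      + \<alpha> * \<epsilon> * ((\<Sum>i<n. x i) + (\<Sum>i<n. u i))"
proof -
  have "C * (\<Sum>t<w. f\<^sub>\<mu> (step t x)) \<le> C * (real w * f\<^sub>\<mu> x - \<alpha> / 2 * (\<Sum>i<n. x i * (\<xi> x i * grad x i)))"
    using avg_f_mu_step_le[OF assms(1)] alpha_pos unfolding C_def by (intro mult_left_mono) auto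
  also have "\<dots> = C * (real w * f\<^sub>\<mu> x) - (\<alpha> + \<alpha>\<^sup>2) * (\<Sum>i<n. x i * (\<xi> x i * grad x i))"
    unfolding C_def by (simp add: algebra_simps power2_eq_square)
  finally have f_part: "C * (\<Sum>t<w. f\<^sub>\<mu> (step t x))
      \<le> C * (real w * f\<^sub>\<mu> x) - (\<alpha> + \<alpha>\<^sup>2) * (\<Sum>i<n. x i * (\<xi> x i * grad x i))" .
  moreover have "\<alpha> * (\<Sum>i<n. (u i - x i) * grad x i) \<le> \<alpha> * (f\<^sub>\<mu> u - f\<^sub>\<mu> x)"
    using f_mu_convex[of x u] alpha_pos by (intro mult_left_mono) auto
  moreover have "(\<Sum>t<w. potential u (step t x) + C * f\<^sub>\<mu> (step t x))
      = (\<Sum>t<w. potential u (step t x)) + C * (\<Sum>t<w. f\<^sub>\<mu> (step t x))"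
    by (simp add: sum.distrib sum_distrib_left)
  moreover have "real w * (potential u x + C * f\<^sub>\<mu> x) = real w * potential u x + C * (real w * f\<^sub>\<mu> x)"
    by (simp add: algebra_simps)
  ultimately show ?thesis using avg_potential_step_le[of x u, OF assms(1) u_nonneg] by linarith
qed

subsection \<open>Expectation over the bucket choices\<close>

lemma alg_iter_cong:
  "(\<And>i. i < k \<Longrightarrow> ts i = ts' i) \<Longrightarrow> alg_iter m n A \<epsilon> ts k = alg_iter m n A \<epsilon> ts' k"
  by (induction k) auto

definition expect :: "nat \<Rightarrow> ((nat \<Rightarrow> real) \<Rightarrow> real) \<Rightarrow> real" where
  "expect k h = (\<Sum>ts \<in> {..<k} \<rightarrow>\<^sub>E {..<w}. h (alg_iter m n A \<epsilon> ts k)) / real w ^ k"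

lemma expect_0: "expect 0 h = h x\<^sub>0"
  unfolding expect_def by simp

lemma expect_Suc: "expect (Suc k) h = expect k (\<lambda>x. (\<Sum>t<w. h (step t x)) / real w)"
proof -
  have "(\<Sum>ts \<in> {..<Suc k} \<rightarrow>\<^sub>E {..<w}. h (alg_iter m n A \<epsilon> ts (Suc k)))
      = (\<Sum>ts \<in> {..<k} \<rightarrow>\<^sub>E {..<w}. \<Sum>t<w. h (step t (alg_iter m n A \<epsilon> ts k)))"
    unfolding sum_PiE_lessThan_Suc using alg_iter_cong[of k "ts(k := t)" ts for ts t] by simp
  thus ?thesis
    unfolding expect_def by (simp add: sum_divide_distrib[symmetric] divide_divide_eq_left mult.commute)
qed

lemma expect_linear: "expect k (\<lambda>x. h x + c * h' x + b) = expect k h + c * expect k h' + b"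
proof -
  have "card ({..<k} \<rightarrow>\<^sub>E {..<w}) = w ^ k" by (simp add: card_PiE)
  thus ?thesis
    unfolding expect_def using w_pos by (simp add: sum.distrib sum_distrib_left add_divide_distrib)
qed

lemma expect_const: "expect k (\<lambda>_. b) = b"
  unfolding expect_def using w_pos by (simp add: card_PiE)

lemma expect_mono: "(\<And>x. admissible x \<Longrightarrow> h x \<le> h' x) \<Longrightarrow> expect k h \<le> expect k h'"
  unfolding expect_def using w_pos admissible_iter by (intro divide_right_mono sum_mono) auto

lemma expect_f_mu_antimono: "k \<le> k' \<Longrightarrow> expect k' f\<^sub>\<mu> \<le> expect k f\<^sub>\<mu>"
proof (induction k' rule: dec_induct)
  case (step j)
  have "expect (Suc j) f\<^sub>\<mu> \<le> expect j f\<^sub>\<mu>"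
    unfolding expect_Suc
  proof (rule expect_mono)
    fix x assume "admissible x"
    hence "(\<Sum>t<w. f\<^sub>\<mu> (step t x)) \<le> (\<Sum>t<w. f\<^sub>\<mu> x)" by (intro sum_mono f_mu_step_le)
    thus "(\<Sum>t<w. f\<^sub>\<mu> (step t x)) / real w \<le> f\<^sub>\<mu> x" using w_pos by (simp add: divide_le_eq mult.commute)
  qed
  thus ?case using step.IH by linarith
qed simp

lemma expect_potential_telescope:
  assumes u_nonneg: "\<And>i. i < n \<Longrightarrow> 0 \<le> u i"
  defines "C \<equiv> 2 * (1 + \<alpha>)" and "B \<equiv> f\<^sub>\<mu> u + \<epsilon> * (2 * opt + (\<Sum>i<n. u i))"
  shows "expect k (\<lambda>x. potential u x + C * f\<^sub>\<mu> x) + \<alpha> / real w * (\<Sum>k'<k. expect k' f\<^sub>\<mu>)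
    \<le> potential u x\<^sub>0 + C * f\<^sub>\<mu> x\<^sub>0 + real k * (\<alpha> / real w * B)"
proof (induction k)
  case (Suc k)
  let ?\<Psi> = "\<lambda>x. potential u x + C * f\<^sub>\<mu> x"
  have "(\<Sum>t<w. ?\<Psi> (step t x)) / real w \<le> ?\<Psi> x + (- (\<alpha> / real w)) * f\<^sub>\<mu> x + \<alpha> / real w * B"
    if "admissible x" for x
  proof -
    have "\<alpha> * \<epsilon> * ((\<Sum>i<n. x i) + (\<Sum>i<n. u i)) \<le> \<alpha> * \<epsilon> * (2 * opt + (\<Sum>i<n. u i))"
      using admissible_sum_le_OPT[OF that] alpha_pos eps_pos by (intro mult_left_mono) auto
    moreover have "(\<Sum>t<w. ?\<Psi> (step t x))
        \<le> real w * ?\<Psi> x + \<alpha> * (f\<^sub>\<mu> u - f\<^sub>\<mu> x) + \<alpha> * \<epsilon> * ((\<Sum>i<n. x i) + (\<Sum>i<n. u i))"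
      using avg_step_le[of x u, OF that u_nonneg] unfolding C_def .
    moreover have "real w * (?\<Psi> x + (- (\<alpha> / real w)) * f\<^sub>\<mu> x + \<alpha> / real w * B)
        = real w * ?\<Psi> x - \<alpha> * f\<^sub>\<mu> x + \<alpha> * f\<^sub>\<mu> u + \<alpha> * \<epsilon> * (2 * opt + (\<Sum>i<n. u i))"
      using w_pos unfolding B_def by (simp add: field_simps)
    ultimately have "(\<Sum>t<w. ?\<Psi> (step t x)) \<le> real w * (?\<Psi> x + (- (\<alpha> / real w)) * f\<^sub>\<mu> x + \<alpha> / real w * B)"
      by (simp add: algebra_simps)
    thus ?thesis using w_pos by (simp add: pos_divide_le_eq mult.commute)
  qed
  hence "expect (Suc k) ?\<Psi> \<le> expect k (\<lambda>x. ?\<Psi> x + (- (\<alpha> / real w)) * f\<^sub>\<mu> x + \<alpha> / real w * B)"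
    unfolding expect_Suc by (rule expect_mono)
  also have "\<dots> = expect k ?\<Psi> + (- (\<alpha> / real w)) * expect k f\<^sub>\<mu> + \<alpha> / real w * B"
    by (rule expect_linear)
  finally have "expect (Suc k) ?\<Psi> \<le> expect k ?\<Psi> - \<alpha> / real w * expect k f\<^sub>\<mu> + \<alpha> / real w * B"
    by simp
  moreover have "(\<Sum>k'<Suc k. expect k' f\<^sub>\<mu>) = (\<Sum>k'<k. expect k' f\<^sub>\<mu>) + expect k f\<^sub>\<mu>" by simp
  moreover have "real (Suc k) * (\<alpha> / real w * B) = real k * (\<alpha> / real w * B) + \<alpha> / real w * B"
    by (simp add: distrib_right add_divide_distrib)
  ultimately show ?case using Suc.IH by (simp only: distrib_left)
qed (simp add: expect_0)

lemma f_mu_comparison_point_le: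
  assumes feas: "packing_feasible m n A z"
  shows "f\<^sub>\<mu> (\<lambda>i. (1 - \<epsilon>/2) * z i) \<le> - ((1 - \<epsilon>/2) * (\<Sum>i<n. z i)) + \<mu> * \<epsilon>"
proof -
  have "Ax (\<lambda>i. (1 - \<epsilon>/2) * z i) j \<le> 1 - \<epsilon>/2" if "j < m" for j
  proof -
    have "Ax (\<lambda>i. (1 - \<epsilon>/2) * z i) j = (1 - \<epsilon>/2) * Ax z j"
      unfolding matvec_def by (simp add: sum_distrib_left mult_ac)
    also have "\<dots> \<le> (1 - \<epsilon>/2) * 1"
      using feas that eps_le_half unfolding packing_feasible_def by (intro mult_left_mono) auto
    finally show ?thesis by simp
  qed
  thus ?thesis unfolding f_mu_def using penalty_small by (simp add: sum_distrib_left)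
qed

lemma expect_f_mu_T_le_potential:
  assumes u_nonneg: "\<And>i. i < n \<Longrightarrow> 0 \<le> u i"
  defines "C \<equiv> 2 * (1 + \<alpha>)" and "K \<equiv> real T * \<alpha> / real w"
  shows "(K + C) * expect T f\<^sub>\<mu> \<le> potential u x\<^sub>0 - (\<Sum>i<n. u i - u i * ln (u i)) + C * f\<^sub>\<mu> x\<^sub>0
    + K * (f\<^sub>\<mu> u + \<epsilon> * (2 * opt + (\<Sum>i<n. u i)))"
proof -
  define E where "E = expect T f\<^sub>\<mu>"
  have "real T * E \<le> (\<Sum>k<T. expect k f\<^sub>\<mu>)"
    using sum_mono[of "{..<T}" "\<lambda>_. E" "\<lambda>k. expect k f\<^sub>\<mu>"] expect_f_mu_antimono unfolding E_def by simp
  hence "\<alpha> / real w * (real T * E) \<le> \<alpha> / real w * (\<Sum>k<T. expect k f\<^sub>\<mu>)"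
    using alpha_pos w_pos by (intro mult_left_mono) auto
  moreover have "K * E = \<alpha> / real w * (real T * E)" unfolding K_def by simp
  moreover have "expect T (\<lambda>_. \<Sum>i<n. u i - u i * ln (u i)) \<le> expect T (potential u)"
    by (rule expect_mono) (rule potential_ge[OF u_nonneg admissible_pos])
  hence "(\<Sum>i<n. u i - u i * ln (u i)) + C * E \<le> expect T (\<lambda>x. potential u x + C * f\<^sub>\<mu> x)"
    using expect_linear[of T "potential u" C f\<^sub>\<mu> 0] unfolding expect_const E_def by simp
  moreover have "expect T (\<lambda>x. potential u x + C * f\<^sub>\<mu> x) + \<alpha> / real w * (\<Sum>k<T. expect k f\<^sub>\<mu>)
      \<le> potential u x\<^sub>0 + C * f\<^sub>\<mu> x\<^sub>0 + K * (f\<^sub>\<mu> u + \<epsilon> * (2 * opt + (\<Sum>i<n. u i)))"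
    using expect_potential_telescope[of u T, OF u_nonneg] unfolding C_def K_def by simp
  ultimately show ?thesis unfolding E_def by (simp add: algebra_simps)
qed

lemma expect_f_mu_T_le:
  assumes feas: "packing_feasible m n A z"
  shows "expect T f\<^sub>\<mu> \<le> - (1 - (19/10) * \<epsilon>) * (\<Sum>i<n. z i) + 3 * \<epsilon> * opt"
proof -
  define u where "u i = (1 - \<epsilon>/2) * z i" for i
  define C where "C = 2 * (1 + \<alpha>)"
  define K where "K = real T * \<alpha> / real w"
  have u_nonneg: "0 \<le> u i" if "i < n" for i
    using feas that eps_le_half unfolding u_def packing_feasible_def by simp
  have sum_u: "(\<Sum>i<n. u i) = (1 - \<epsilon>/2) * (\<Sum>i<n. z i)" unfolding u_def by (simp add: sum_distrib_left)
  have "K * f\<^sub>\<mu> u \<le> K * (- (\<Sum>i<n. u i) + \<mu> * \<epsilon>)"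
    using f_mu_comparison_point_le[OF feas, folded u_def] alpha_pos w_pos
    unfolding K_def sum_u by (intro mult_left_mono) auto
  moreover have "C * f\<^sub>\<mu> x\<^sub>0 \<le> C * (\<mu> * \<epsilon>)"
    using f_mu_x0_le alpha_pos unfolding C_def by (intro mult_left_mono) auto
  ultimately have "(K + C) * expect T f\<^sub>\<mu> \<le> 1 + (\<Sum>i<n. u i) * ln (real n) + C * (\<mu> * \<epsilon>)
      + K * (- (\<Sum>i<n. u i) + \<mu> * \<epsilon> + \<epsilon> * (2 * opt + (\<Sum>i<n. u i)))"
    using expect_f_mu_T_le_potential[of u, OF u_nonneg, folded C_def K_def]
      potential_x0_le[OF feas, folded u_def] by (simp add: algebra_simps)
  hence H: "(K + C) * expect T f\<^sub>\<mu> \<le> 1 + (1 - \<epsilon>/2) * (\<Sum>i<n. z i) * ln (real n) + C * (\<mu> * \<epsilon>)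
      + K * (- ((1 - \<epsilon>/2) * (\<Sum>i<n. z i)) + \<mu> * \<epsilon> + \<epsilon> * (2 * opt + (1 - \<epsilon>/2) * (\<Sum>i<n. z i)))"
    unfolding sum_u .
  have Ke: "10 * ((6/10) + ln (real n)) \<le> K * \<epsilon>"
  proof -
    have "10 * ln (2 * real n) \<le> K * \<epsilon>" using T_alpha_div_w_ge eps_pos unfolding K_def by (simp add: field_simps)
    thus ?thesis using ln2_ge_two_thirds n_pos by (simp add: ln_mult)
  qed
  have "0 \<le> (\<Sum>i<n. z i)" using feas unfolding packing_feasible_def by (auto intro: sum_nonneg)
  moreover have "0 < C" "C \<le> (21/10)" using alpha_pos alpha_le unfolding C_def by auto
  moreover have "0 \<le> \<mu> * \<epsilon>" "\<mu> * \<epsilon> \<le> (21/100) * \<epsilon>" using mu_pos mu_le eps_pos by auto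
  moreover have "0 \<le> ln (real n)" using n_pos by simp
  ultimately show ?thesis using absorb_error_terms[OF eps_pos eps_le_half Ke _ _ _ OPT_ge_1 _ _ _ H] by blast
qed

lemma expect_f_mu_T_le_OPT: "expect T f\<^sub>\<mu> \<le> - (1 - 5 * \<epsilon>) * opt"
proof -
  define E where "E = expect T f\<^sub>\<mu>"
  have pos: "0 < 1 - (19/10) * \<epsilon>" using eps_le_half by simp
  have "opt \<le> (3 * \<epsilon> * opt - E) / (1 - (19/10) * \<epsilon>)"
  proof (rule OPT_le)
    fix z assume "packing_feasible m n A z"
    hence "(1 - (19/10) * \<epsilon>) * (\<Sum>i<n. z i) \<le> 3 * \<epsilon> * opt - E"
      using expect_f_mu_T_le unfolding E_def by (simp add: algebra_simps)
    thus "(\<Sum>i<n. z i) \<le> (3 * \<epsilon> * opt - E) / (1 - (19/10) * \<epsilon>)" using pos by (simp add: field_simps)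
  qed
  hence "(1 - (19/10) * \<epsilon>) * opt \<le> 3 * \<epsilon> * opt - E" using pos by (simp add: field_simps)
  moreover have "0 \<le> \<epsilon> * opt" using eps_pos OPT_ge_1 by simp
  ultimately show ?thesis unfolding E_def by (simp add: algebra_simps)
qed

end

theorem theorem2p3:
  fixes m n :: nat and A :: "nat \<Rightarrow> nat \<Rightarrow> real" and \<epsilon> :: real
  assumes "0 < n"
    and "\<And>j i. j < m \<Longrightarrow> i < n \<Longrightarrow> 0 \<le> A j i"
    and "\<And>i. i < n \<Longrightarrow> \<exists>j<m. A j i \<noteq> 0"
    and "Min (colnorm m A ` {..<n}) = 1"
    and "0 < \<epsilon>" and "\<epsilon> \<le> 1 / 2"
  shows "expected_f_output m n A \<epsilon> \<le> - (1 - 5 * \<epsilon>) * OPT m n A"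
proof -
  interpret packing_algorithm m n A \<epsilon> by unfold_locales (use assms in auto)
  have "expected_f_output m n A \<epsilon> = expect T f\<^sub>\<mu>"
    unfolding expected_f_output_def expect_def Let_def ..
  thus ?thesis using expect_f_mu_T_le_OPT by simp
qed

end
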